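(* Let $(\rho_\varepsilon,u_\varepsilon)$ be a smooth solution of the approximating system (A) with $\rho_\varepsilon>0$, let $c>0$ and $v_\varepsilon=u_\varepsilon+c\nabla\phi_\varepsilon(\rho_\varepsilon)$. Then $(\rho_\varepsilon,v_\varepsilon)$ satisfies $$\partial_t\rho_\varepsilon+\operatorname{div}(\rho_\varepsilon v_\varepsilon)=c\Delta h_\varepsilon(\rho_\varepsilon),$$ $$\partial_t(\rho_\varepsilon v_\varepsilon)+\operatorname{div}(\rho_\varepsilon v_\varepsilon\otimes v_\varepsilon)+\nabla\rho_\varepsilon^\gamma+\tilde\lambda\nabla p_\varepsilon(\rho_\varepsilon)-c\Delta(h_\varepsilon(\rho_\varepsilon)v_\varepsilon)+\tilde p_\varepsilon(\rho_\varepsilon)v_\varepsilon-2(\nu-c)\operatorname{div}(h_\varepsilon(\rho_\varepsilon)Dv_\varepsilon)-(2\nu-c)\nabla(g_\varepsilon(\rho_\varepsilon)\operatorname{div}v_\varepsilon)-\tilde\kappa^2\operatorname{div}\mathbb K_\varepsilon=0,$$ where $\tilde\kappa^2=\kappa^2-2\nu c+c^2$ and $\tilde\lambda=(\mu-c)/\mu$.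
   Context: $d\in\{2,3\}$, $\mathbb T^d$ the flat torus. Let $\nu,\kappa>0$ with $\kappa<\nu$, $\gamma>1$, $\varepsilon>0$ small, $\mu=\nu-\sqrt{\nu^2-\kappa^2}$. For $\rho>0$: $h_\varepsilon(\rho)=\rho+\varepsilon\rho^{7/8}+\varepsilon\rho^\gamma$, $g_\varepsilon(\rho)=\rho h_\varepsilon'(\rho)-h_\varepsilon(\rho)$; $\phi_\varepsilon$ is any function with $\rho\phi_\varepsilon'(\rho)=h_\varepsilon'(\rho)$; $\lambda(\varepsilon)=e^{-1/\varepsilon^4}$; $\tilde p_\varepsilon(\rho)=\lambda(\varepsilon)(\rho^{1/\varepsilon^2}+\rho^{-1/\varepsilon^2})$; $p_\varepsilon$ is any function with $p_\varepsilon'(\rho)=\mu\tilde p_\varepsilon(\rho)h_\varepsilon'(\rho)/\rho$ (the paper takes the primitive that is a linear combination of powers of $\rho$). $Du=(\nabla u+\nabla u^T)/2$, $\mathbb S_\varepsilon=h_\varepsilon(\rho)Du+g_\varepsilon(\rho)\operatorname{div}u\,\mathbb I$, $\operatorname{div}\mathbb K_\varepsilon=2\rho\nabla\big(h_\varepsilon'(\rho)\operatorname{div}(h_\varepsilon'(\rho)\nabla\sqrt\rho)/\sqrt\rho\big)$ (evaluated at $\rho=\rho_\varepsilon$). System (A) is $$\partial_t\rho+\operatorname{div}(\rho u)=0,\quad \partial_t(\rho u)+\operatorname{div}(\rho u\otimes u)-2\nu\operatorname{div}\mathbb S_\varepsilon+\nabla(\rho^\gamma+p_\varepsilon(\rho))+\tilde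 p_\varepsilon(\rho)u=\kappa^2\operatorname{div}\mathbb K_\varepsilon.$$ *)

theory Defs
  imports "HOL-Analysis.Analysis"
begin

text \<open>Space-time fields on (time) x (R^d), with R^d = real^'n.
  The flat torus T^d is modelled by fields that are 1-periodic in each coordinate.\<close>

type_synonym ('n, 'b) field = "real \<Rightarrow> real^'n \<Rightarrow> 'b"

definition dt :: "('n, 'b::real_normed_vector) field \<Rightarrow> ('n, 'b) field" where
  "dt f = (\<lambda>t x. vector_derivative (\<lambda>s. f s x) (at t))"

definition pd :: "'n \<Rightarrow> ('n, 'b::real_normed_vector) field \<Rightarrow> ('n::finite, 'b) field" where
  "pd i f = (\<lambda>t x. vector_derivative (\<lambda>s. f t (x + s *\<^sub>R axis i 1)) (at 0))"

definition grad :: "('n::finite, real) field \<Rightarrow> ('n, real^'n) field" where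
  "grad f = (\<lambda>t x. \<chi> i. pd i f t x)"

definition divg :: "('n::finite, real^'n) field \<Rightarrow> ('n, real) field" where
  "divg U = (\<lambda>t x. \<Sum>i\<in>UNIV. pd i U t x $ i)"

definition divM :: "('n::finite, real^'n^'n) field \<Rightarrow> ('n, real^'n) field" where
  "divM M = (\<lambda>t x. \<chi> i. \<Sum>j\<in>UNIV. pd j M t x $ i $ j)"

definition lap :: "('n::finite, 'b::real_normed_vector) field \<Rightarrow> ('n, 'b) field" where
  "lap f = (\<lambda>t x. \<Sum>i\<in>UNIV. pd i (pd i f) t x)"

definition outer :: "real^'n \<Rightarrow> real^'n \<Rightarrow> real^'n^'n" where
  "outer a b = (\<chi> i j. a $ i * b $ j)"

definition symgrad :: "('n::finite, real^'n) field \<Rightarrow> ('n, real^'n^'n) field" where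
  "symgrad U = (\<lambda>t x. \<chi> i j. (pd j U t x $ i + pd i U t x $ j) / 2)"

text \<open>Smoothness (C-infinity) on the time set I times R^d, coinductively:
  jointly differentiable and all first partial derivatives again smooth.\<close>
coinductive smooth_st :: "real set \<Rightarrow> ('n::finite, 'b::real_normed_vector) field \<Rightarrow> bool"
  for I where
  "\<lbrakk>\<forall>t\<in>I. \<forall>x. (\<lambda>z. f (fst z) (snd z)) differentiable (at (t, x));
    smooth_st I (dt f); \<forall>i. smooth_st I (pd i f)\<rbrakk> \<Longrightarrow> smooth_st I f"

definition periodic_field :: "('n::finite, 'b) field \<Rightarrow> bool" where
  "periodic_field f \<longleftrightarrow> (\<forall>t x i. f t (x + axis i 1) = f t x)"

definition h_eps :: "real \<Rightarrow> real \<Rightarrow> real \<Rightarrow> real" where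
  "h_eps \<gamma> \<epsilon> r = r + \<epsilon> * r powr (7/8) + \<epsilon> * r powr \<gamma>"

definition hp_eps :: "real \<Rightarrow> real \<Rightarrow> real \<Rightarrow> real" where
  "hp_eps \<gamma> \<epsilon> r = deriv (h_eps \<gamma> \<epsilon>) r"

definition g_eps :: "real \<Rightarrow> real \<Rightarrow> real \<Rightarrow> real" where
  "g_eps \<gamma> \<epsilon> r = r * hp_eps \<gamma> \<epsilon> r - h_eps \<gamma> \<epsilon> r"

definition lam_eps :: "real \<Rightarrow> real" where
  "lam_eps \<epsilon> = exp (- 1 / \<epsilon> ^ 4)"

definition ptil_eps :: "real \<Rightarrow> real \<Rightarrow> real" where
  "ptil_eps \<epsilon> r = lam_eps \<epsilon> * (r powr (1 / \<epsilon>\<^sup>2) + r powr (- 1 / \<epsilon>\<^sup>2))"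

definition mu :: "real \<Rightarrow> real \<Rightarrow> real" where
  "mu \<nu> \<kappa> = \<nu> - sqrt (\<nu>\<^sup>2 - \<kappa>\<^sup>2)"

definition divK :: "real \<Rightarrow> real \<Rightarrow> ('n::finite, real) field \<Rightarrow> ('n, real^'n) field" where
  "divK \<gamma> \<epsilon> \<rho> =
    (let w = (\<lambda>t x. hp_eps \<gamma> \<epsilon> (\<rho> t x) *\<^sub>R grad (\<lambda>s y. sqrt (\<rho> s y)) t x);
         q = (\<lambda>t x. hp_eps \<gamma> \<epsilon> (\<rho> t x) * divg w t x / sqrt (\<rho> t x))
     in (\<lambda>t x. (2 * \<rho> t x) *\<^sub>R grad q t x))"

definition stress :: "real \<Rightarrow> real \<Rightarrow> ('n::finite, real) field \<Rightarrow> ('n, real^'n) field \<Rightarrow> ('n, real^'n^'n) field" where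
  "stress \<gamma> \<epsilon> \<rho> u = (\<lambda>t x. h_eps \<gamma> \<epsilon> (\<rho> t x) *\<^sub>R symgrad u t x
                              + (g_eps \<gamma> \<epsilon> (\<rho> t x) * divg u t x) *\<^sub>R mat 1)"

end

theory Submission
  imports Defs
begin

text \<open>Write \<open>w = \<nabla>\<phi>(\<rho>)\<close>. Since \<open>r \<phi>'(r) = h'(r)\<close>, we have \<open>\<rho> w = \<nabla>h(\<rho>)\<close>, so the extra mass
  flux \<open>c \<rho> w\<close> is \<open>c \<nabla>h(\<rho>)\<close>, whose divergence is \<open>c \<Delta>h(\<rho>)\<close>. In the momentum equation,
  substitute \<open>v = u + c w\<close> and sort by powers of \<open>c\<close>. The \<open>c\<^sup>0\<close> part is the original equation. The
  \<open>c\<^sup>1\<close> part cancels by the mass equation (\<open>\<partial>\<^sub>t(\<rho> w) = -\<nabla>(h'(\<rho>) div(\<rho> u))\<close>), the product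
  rule, the identity \<open>g(\<rho>) div u = h'(\<rho>) div(\<rho> u) - div(h(\<rho>) u)\<close> and the symmetry of mixed
  partial derivatives; the \<open>c\<^sup>2\<close> part cancels by the symmetry of the Hessian of \<open>\<phi>(\<rho>)\<close>. The
  Korteweg term is \<open>div K = div(h(\<rho>) \<nabla>\<^sup>2\<phi>(\<rho>)) + \<nabla>(g(\<rho>) \<Delta>\<phi>(\<rho>))\<close>, which absorbs the
  viscous terms in \<open>w\<close> with weight \<open>2\<nu>c - c\<^sup>2\<close>, and the damping term \<open>ptil_eps(\<rho>) c w\<close> equals
  \<open>(c/\<mu>) \<nabla>p(\<rho>)\<close>, which accounts for the factor \<open>(\<mu> - c)/\<mu>\<close>.\<close>

section \<open>Symmetry of mixed directional derivatives\<close>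

lemma has_real_derivative_along_line_shift:
  fixes F :: "'a::real_normed_vector \<Rightarrow> real"
  assumes "((\<lambda>\<tau>. F ((z + s *\<^sub>R a) + \<tau> *\<^sub>R a)) has_real_derivative L) (at 0)"
  shows "((\<lambda>\<sigma>. F (z + \<sigma> *\<^sub>R a)) has_real_derivative L) (at s)"
proof -
  have d: "((\<lambda>\<sigma>. \<sigma> - s) has_real_derivative 1) (at s)"
    by (auto intro!: derivative_eq_intros)
  have "((\<lambda>\<sigma>. F ((z + s *\<^sub>R a) + (\<sigma> - s) *\<^sub>R a)) has_real_derivative L * 1) (at s)"
    using DERIV_chain2[OF _ d, of "\<lambda>\<tau>. F ((z + s *\<^sub>R a) + \<tau> *\<^sub>R a)" L] assms by simp
  moreover have "\<And>\<sigma>. (z + s *\<^sub>R a) + (\<sigma> - s) *\<^sub>R a = z + \<sigma> *\<^sub>R a"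
    by (simp add: algebra_simps)
  ultimately show ?thesis by simp
qed

lemma norm_scaleR_add_scaleR_le:
  fixes a b :: "'a::real_normed_vector"
  assumes "0 \<le> s" "s \<le> h"
  shows "norm (h *\<^sub>R b + s *\<^sub>R a) \<le> h * (norm a + norm b)" and "norm (s *\<^sub>R a) \<le> h * (norm a + norm b)"
proof -
  have sa: "norm (s *\<^sub>R a) \<le> h * norm a"
    using assms by (simp add: mult_right_mono)
  have "norm (h *\<^sub>R b + s *\<^sub>R a) \<le> h * norm b + norm (s *\<^sub>R a)"
    using norm_triangle_ineq[of "h *\<^sub>R b" "s *\<^sub>R a"] assms by simp
  with sa show "norm (h *\<^sub>R b + s *\<^sub>R a) \<le> h * (norm a + norm b)"
    by (simp add: algebra_simps)
  show "norm (s *\<^sub>R a) \<le> h * (norm a + norm b)"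
    using sa assms by (simp add: algebra_simps add_increasing2)
qed

text \<open>The second difference of \<open>F\<close> with steps \<open>h a\<close> and \<open>h b\<close> is, by the mean value theorem
  applied along \<open>a\<close>, a difference of \<open>a\<close>-derivatives, which the derivative \<open>DA\<close> of the
  \<open>a\<close>-derivative approximates to first order.\<close>
lemma second_difference_approx:
  fixes F :: "'a::real_normed_vector \<Rightarrow> real"
  assumes Fa: "\<And>z. z \<in> ball p d \<Longrightarrow> ((\<lambda>s. F (z + s *\<^sub>R a)) has_real_derivative Fa z) (at 0)"
    and DA: "\<And>y. norm (y - p) < d \<Longrightarrow> \<bar>Fa y - Fa p - DA (y - p)\<bar> \<le> e * norm (y - p)"
    and lin: "linear DA" and e0: "0 \<le> e" and h: "0 < h" and hd: "h * (norm a + norm b) < d"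
  shows "\<bar>(F (p + h *\<^sub>R a + h *\<^sub>R b) - F (p + h *\<^sub>R a) - F (p + h *\<^sub>R b) + F p) - h * h * DA b\<bar>
           \<le> 2 * e * h * (h * (norm a + norm b))"
proof -
  define g where "g s = F (p + h *\<^sub>R b + s *\<^sub>R a) - F (p + s *\<^sub>R a)" for s
  define g' where "g' s = Fa (p + h *\<^sub>R b + s *\<^sub>R a) - Fa (p + s *\<^sub>R a)" for s
  note nb = norm_scaleR_add_scaleR_le(1)[where h=h and a=a and b=b]
    and nb2 = norm_scaleR_add_scaleR_le(2)[where h=h and a=a and b=b]
  have in_ball: "p + v \<in> ball p d" if "norm v \<le> h * (norm a + norm b)" for v
    using that hd by (simp add: dist_norm)
  have der: "(g has_real_derivative g' s) (at s)" if "0 \<le> s" "s \<le> h" for s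
  proof -
    have "((\<lambda>\<sigma>. F ((p + h *\<^sub>R b) + \<sigma> *\<^sub>R a)) has_real_derivative Fa (p + h *\<^sub>R b + s *\<^sub>R a)) (at s)"
      by (rule has_real_derivative_along_line_shift) (use Fa[OF in_ball[OF nb[OF that]]] in \<open>simp add: add.assoc\<close>)
    moreover have "((\<lambda>\<sigma>. F (p + \<sigma> *\<^sub>R a)) has_real_derivative Fa (p + s *\<^sub>R a)) (at s)"
      by (rule has_real_derivative_along_line_shift) (use Fa[OF in_ball[OF nb2[OF that]]] in simp)
    ultimately show ?thesis unfolding g_def g'_def
      by (intro derivative_eq_intros) auto
  qed
  obtain \<xi> where \<xi>: "0 < \<xi>" "\<xi> < h" "g h - g 0 = (h - 0) * g' \<xi>"
    using MVT2[OF h, of g g'] der by auto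
  have gdelta: "g h - g 0 = F (p + h *\<^sub>R a + h *\<^sub>R b) - F (p + h *\<^sub>R a) - F (p + h *\<^sub>R b) + F p"
    unfolding g_def by (simp add: algebra_simps)
  define y1 where "y1 = p + h *\<^sub>R b + \<xi> *\<^sub>R a"
  define y2 where "y2 = p + \<xi> *\<^sub>R a"
  have n1: "norm (y1 - p) \<le> h * (norm a + norm b)" using nb[of \<xi>] \<xi> by (simp add: y1_def)
  have n2: "norm (y2 - p) \<le> h * (norm a + norm b)" using nb2[of \<xi>] \<xi> by (simp add: y2_def)
  have "DA (y1 - p) - DA (y2 - p) = DA (h *\<^sub>R b)"
    using lin by (simp add: y1_def y2_def flip: linear_diff)
  also have "\<dots> = h * DA b" using lin by (simp add: linear_scale)
  finally have "g' \<xi> - h * DA b = (Fa y1 - Fa p - DA (y1 - p)) - (Fa y2 - Fa p - DA (y2 - p))"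
    unfolding g'_def y1_def[symmetric] y2_def[symmetric] by simp
  also have "\<bar>\<dots>\<bar> \<le> e * norm (y1 - p) + e * norm (y2 - p)"
    using DA[of y1] DA[of y2] n1 n2 hd by (smt (verit))
  also have "\<dots> \<le> 2 * e * (h * (norm a + norm b))"
    using mult_left_mono[OF n1 e0] mult_left_mono[OF n2 e0] by simp
  finally have "\<bar>g' \<xi> - h * DA b\<bar> \<le> 2 * e * (h * (norm a + norm b))" .
  then have "h * \<bar>g' \<xi> - h * DA b\<bar> \<le> h * (2 * e * (h * (norm a + norm b)))"
    using h by (simp add: mult_left_mono)
  moreover have "(g h - g 0) - h * h * DA b = h * (g' \<xi> - h * DA b)"
    using \<xi>(3) by (simp add: algebra_simps)
  then have "\<bar>(g h - g 0) - h * h * DA b\<bar> = h * \<bar>g' \<xi> - h * DA b\<bar>"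
    using h by (simp add: abs_mult)
  ultimately show ?thesis using gdelta by (simp add: algebra_simps)
qed

text \<open>Schwarz: the second difference with steps \<open>h a\<close>, \<open>h b\<close> is \<open>o(h\<^sup>2)\<close>-close both to
  \<open>h\<^sup>2 DA b\<close> and to \<open>h\<^sup>2 DB a\<close>.\<close>
lemma mixed_directional_derivatives_commute:
  fixes F :: "'a::real_normed_vector \<Rightarrow> real"
  assumes S: "open S" "p \<in> S"
    and Fa: "\<And>z. z \<in> S \<Longrightarrow> ((\<lambda>s. F (z + s *\<^sub>R a)) has_real_derivative Fa z) (at 0)"
    and Fb: "\<And>z. z \<in> S \<Longrightarrow> ((\<lambda>s. F (z + s *\<^sub>R b)) has_real_derivative Fb z) (at 0)"
    and DA: "(Fa has_derivative DA) (at p)" and DB: "(Fb has_derivative DB) (at p)"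
  shows "DA b = DB a"
proof (rule ccontr)
  assume "DA b \<noteq> DB a"
  define \<delta> where "\<delta> = \<bar>DA b - DB a\<bar>"
  have \<delta>: "0 < \<delta>" using \<open>DA b \<noteq> DB a\<close> by (simp add: \<delta>_def)
  define M where "M = norm a + norm b"
  have M0: "0 \<le> M" by (simp add: M_def)
  define e where "e = \<delta> / (8 * (M + 1))"
  have e: "0 < e" using \<delta> M0 by (simp add: e_def)
  obtain d0 where d0: "0 < d0" "ball p d0 \<subseteq> S" using S open_contains_ball by blast
  obtain d1 where d1: "0 < d1" "\<And>y. norm (y - p) < d1 \<Longrightarrow> norm (Fa y - Fa p - DA (y - p)) \<le> e * norm (y - p)"
    using DA e unfolding has_derivative_at_alt by blast
  obtain d2 where d2: "0 < d2" "\<And>y. norm (y - p) < d2 \<Longrightarrow> norm (Fb y - Fb p - DB (y - p)) \<le> e * norm (y - p)"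
    using DB e unfolding has_derivative_at_alt by blast
  define d where "d = min d0 (min d1 d2)"
  have d: "0 < d" using d0 d1 d2 by (simp add: d_def)
  define h where "h = d / (2 * (M + 1))"
  have h: "0 < h" using d M0 by (simp add: h_def)
  have hM: "h * M < d"
  proof -
    have "h * M \<le> h * (M + 1)" using h by simp
    also have "\<dots> = d / 2" using M0 by (simp add: h_def field_simps)
    finally show ?thesis using d by simp
  qed
  define X where "X = F (p + h *\<^sub>R a + h *\<^sub>R b) - F (p + h *\<^sub>R a) - F (p + h *\<^sub>R b) + F p"
  have "\<bar>X - h * h * DA b\<bar> \<le> 2 * e * h * (h * M)"
    unfolding X_def M_def
    by (rule second_difference_approx[where Fa=Fa and d=d])
       (use Fa d0 d1 d_def has_derivative_linear[OF DA] e h hM M_def in auto)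
  moreover have "\<bar>X - h * h * DB a\<bar> \<le> 2 * e * h * (h * M)"
  proof -
    have "\<bar>(F (p + h *\<^sub>R b + h *\<^sub>R a) - F (p + h *\<^sub>R b) - F (p + h *\<^sub>R a) + F p) - h * h * DB a\<bar>
           \<le> 2 * e * h * (h * (norm b + norm a))"
      by (rule second_difference_approx[where Fa=Fb and d=d])
         (use Fb d0 d2 d_def has_derivative_linear[OF DB] e h hM M_def in \<open>auto simp: add.commute\<close>)
    then show ?thesis by (simp add: X_def M_def algebra_simps)
  qed
  moreover have "h * h * \<delta> = \<bar>(X - h * h * DB a) - (X - h * h * DA b)\<bar>"
    using h by (simp add: \<delta>_def abs_mult right_diff_distrib[symmetric] abs_minus_commute)
  ultimately have "h * h * \<delta> \<le> 4 * e * h * (h * M)"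
    by linarith
  also have "\<dots> = h * h * (\<delta> * (M / (2 * (M + 1))))" using M0 by (simp add: e_def field_simps)
  also have "\<dots> < h * h * \<delta>"
    using h \<delta> M0 by (intro mult_strict_left_mono) (auto simp: field_simps intro: add_nonneg_pos)
  finally show False by simp
qed

section \<open>Calculus of space-time fields\<close>

definition st_differentiable :: "('n::finite, 'b::real_normed_vector) field \<Rightarrow> real \<Rightarrow> real^'n \<Rightarrow> bool" where
  "st_differentiable f t x \<longleftrightarrow> (\<lambda>z. f (fst z) (snd z)) differentiable (at (t, x))"

definition st_deriv :: "('n::finite, 'b::real_normed_vector) field \<Rightarrow> real \<Rightarrow> real^'n \<Rightarrow> real \<times> (real^'n) \<Rightarrow> 'b" where
  "st_deriv f t x = frechet_derivative (\<lambda>z. f (fst z) (snd z)) (at (t, x))"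

lemma has_st_deriv:
  "st_differentiable f t x \<Longrightarrow> ((\<lambda>z. f (fst z) (snd z)) has_derivative st_deriv f t x) (at (t, x))"
  unfolding st_differentiable_def st_deriv_def using frechet_derivative_works by blast

lemma has_vector_derivative_pd:
  fixes f :: "('n::finite, 'b::real_normed_vector) field"
  assumes D: "((\<lambda>z. f (fst z) (snd z)) has_derivative D) (at (t, x))"
  shows "((\<lambda>s. f t (x + s *\<^sub>R axis i 1)) has_vector_derivative D (0, axis i 1)) (at 0)"
proof -
  have line: "((\<lambda>s::real. (t, x + s *\<^sub>R axis i 1)) has_derivative (\<lambda>s. (0, s *\<^sub>R axis i 1))) (at 0)"
    by (auto intro!: derivative_eq_intros)
  have "((\<lambda>z. f (fst z) (snd z)) has_derivative D) (at ((\<lambda>s::real. (t, x + s *\<^sub>R axis i 1)) 0))"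
    using D by simp
  from has_derivative_compose[OF line this]
  have "((\<lambda>s. f t (x + s *\<^sub>R axis i 1)) has_derivative (\<lambda>s. D (0, s *\<^sub>R axis i 1))) (at 0)"
    by simp
  moreover have "D (0, s *\<^sub>R axis i 1) = s *\<^sub>R D (0, axis i 1)" for s
  proof -
    have "D (0, s *\<^sub>R axis i 1) = D (s *\<^sub>R (0, axis i 1))" by simp
    also have "\<dots> = s *\<^sub>R D (0, axis i 1)" by (rule linear_scale[OF has_derivative_linear[OF D]])
    finally show ?thesis .
  qed
  ultimately show ?thesis unfolding has_vector_derivative_def by simp
qed

lemma has_vector_derivative_dt:
  fixes f :: "('n::finite, 'b::real_normed_vector) field"
  assumes D: "((\<lambda>z. f (fst z) (snd z)) has_derivative D) (at (t, x))"
  shows "((\<lambda>s. f s x) has_vector_derivative D (1, 0)) (at t)"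
proof -
  have line: "((\<lambda>s::real. (s, x)) has_derivative (\<lambda>s. (s, 0))) (at t)"
    by (auto intro!: derivative_eq_intros)
  have "((\<lambda>z. f (fst z) (snd z)) has_derivative D) (at ((\<lambda>s::real. (s, x)) t))"
    using D by simp
  from has_derivative_compose[OF line this]
  have "((\<lambda>s. f s x) has_derivative (\<lambda>s. D (s, 0))) (at t)"
    by simp
  moreover have "(\<lambda>s. D (s, 0)) = (\<lambda>s. s *\<^sub>R D (1, 0))"
  proof
    fix s :: real
    have "D (s, 0) = D (s *\<^sub>R (1, 0))" by simp
    also have "\<dots> = s *\<^sub>R D (1, 0)" by (rule linear_scale[OF has_derivative_linear[OF D]])
    finally show "D (s, 0) = s *\<^sub>R D (1, 0)" .
  qed
  ultimately show ?thesis unfolding has_vector_derivative_def by metis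
qed

lemma st_derivative_rules:
  fixes F :: "('n::finite, 'b::real_normed_vector) field"
  assumes D: "((\<lambda>z. F (fst z) (snd z)) has_derivative D) (at (t, x))"
  shows "st_differentiable F t x" and "pd i F t x = D (0, axis i 1)" and "dt F t x = D (1, 0)"
  using D has_vector_derivative_pd[OF D] has_vector_derivative_dt[OF D]
  by (auto simp: st_differentiable_def differentiable_def pd_def dt_def vector_derivative_at)

lemma pd_st_deriv: "st_differentiable f t x \<Longrightarrow> pd i f t x = st_deriv f t x (0, axis i 1)"
  using st_derivative_rules(2)[OF has_st_deriv] .

lemma dt_st_deriv: "st_differentiable f t x \<Longrightarrow> dt f t x = st_deriv f t x (1, 0)"
  using st_derivative_rules(3)[OF has_st_deriv] .

lemma pd_cong_slice: "(\<And>y. f t y = g t y) \<Longrightarrow> pd i f t x = pd i g t x"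
  unfolding pd_def by simp

lemma dt_cong_open:
  assumes "open I" "t \<in> I" "\<And>s. s \<in> I \<Longrightarrow> f s x = g s x"
  shows "dt f t x = dt g t x"
proof -
  have "eventually (\<lambda>s. f s x = g s x) (nhds t)"
    unfolding eventually_nhds using assms by blast
  then show ?thesis
    unfolding dt_def by (intro vector_derivative_cong_eq) (auto simp: eventually_at_filter)
qed

lemma st_differentiable_cong_open:
  assumes "open I" "t \<in> I" "\<And>s y. s \<in> I \<Longrightarrow> f s y = g s y" "st_differentiable g t x"
  shows "st_differentiable f t x"
proof -
  obtain D where D: "((\<lambda>z. g (fst z) (snd z)) has_derivative D) (at (t, x))"
    using assms(4) unfolding st_differentiable_def differentiable_def by blast
  have "((\<lambda>z. f (fst z) (snd z)) has_derivative D) (at (t, x))"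
    by (rule has_derivative_transform_within_open[OF D, of "I \<times> UNIV"])
       (use assms in \<open>auto intro: open_Times\<close>)
  then show ?thesis unfolding st_differentiable_def differentiable_def by blast
qed

lemma st_differentiable_if_smooth: "smooth_st I f \<Longrightarrow> t \<in> I \<Longrightarrow> st_differentiable f t x"
  unfolding st_differentiable_def by (erule smooth_st.cases) auto

lemma smooth_st_pd: "smooth_st I f \<Longrightarrow> smooth_st I (pd i f)"
  by (erule smooth_st.cases) auto

lemma smooth_st_dt: "smooth_st I f \<Longrightarrow> smooth_st I (dt f)"
  by (erule smooth_st.cases) auto

lemma
  assumes f: "st_differentiable f t x" and g: "st_differentiable g t x"
  shows st_differentiable_add: "st_differentiable (\<lambda>s y. f s y + g s y) t x"
    and pd_add: "pd i (\<lambda>s y. f s y + g s y) t x = pd i f t x + pd i g t x"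
    and dt_add: "dt (\<lambda>s y. f s y + g s y) t x = dt f t x + dt g t x"
  using st_derivative_rules[where F="\<lambda>s y. f s y + g s y",
      OF has_derivative_add[OF has_st_deriv[OF f] has_st_deriv[OF g]]]
  by (simp_all add: pd_st_deriv[OF f] pd_st_deriv[OF g] dt_st_deriv[OF f] dt_st_deriv[OF g])

lemma pd_diff:
  assumes f: "st_differentiable f t x" and g: "st_differentiable g t x"
  shows "pd i (\<lambda>s y. f s y - g s y) t x = pd i f t x - pd i g t x"
  using st_derivative_rules(2)[where F="\<lambda>s y. f s y - g s y",
      OF has_derivative_diff[OF has_st_deriv[OF f] has_st_deriv[OF g]]]
  by (simp add: pd_st_deriv[OF f] pd_st_deriv[OF g])

lemma st_differentiable_scaleR_const:
  "st_differentiable f t x \<Longrightarrow> st_differentiable (\<lambda>s y. c *\<^sub>R f s y) t x"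
  using st_derivative_rules(1)[where F="\<lambda>s y. c *\<^sub>R f s y",
      OF has_derivative_scaleR_right[OF has_st_deriv]] .

lemma
  fixes f :: "('n::finite, real) field"
  assumes f: "st_differentiable f t x"
  shows st_differentiable_cmult: "st_differentiable (\<lambda>s y. c * f s y) t x"
    and pd_cmult: "pd i (\<lambda>s y. c * f s y) t x = c * pd i f t x"
    and dt_cmult: "dt (\<lambda>s y. c * f s y) t x = c * dt f t x"
  using st_derivative_rules[where F="\<lambda>s y. c * f s y",
      OF has_derivative_mult_right[OF has_st_deriv[OF f]]]
  by (simp_all add: pd_st_deriv[OF f] dt_st_deriv[OF f])

lemma st_differentiable_divide_const:
  fixes f :: "('n::finite, real) field"
  shows "st_differentiable f t x \<Longrightarrow> st_differentiable (\<lambda>s y. f s y / c) t x"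
  using st_differentiable_cmult[of f t x "inverse c"] by (simp add: divide_inverse mult.commute)

lemma
  fixes f g :: "('n::finite, real) field"
  assumes f: "st_differentiable f t x" and g: "st_differentiable g t x"
  shows st_differentiable_mult: "st_differentiable (\<lambda>s y. f s y * g s y) t x"
    and pd_mult: "pd i (\<lambda>s y. f s y * g s y) t x = f t x * pd i g t x + pd i f t x * g t x"
  using st_derivative_rules[where F="\<lambda>s y. f s y * g s y",
      OF has_derivative_mult[OF has_st_deriv[OF f] has_st_deriv[OF g]]]
  by (simp_all add: pd_st_deriv[OF f] pd_st_deriv[OF g])

lemma st_differentiable_scaleR:
  fixes f :: "('n::finite, real) field"
  shows "st_differentiable f t x \<Longrightarrow> st_differentiable g t x \<Longrightarrow> st_differentiable (\<lambda>s y. f s y *\<^sub>R g s y) t x"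
  using st_derivative_rules(1)[where F="\<lambda>s y. f s y *\<^sub>R g s y",
      OF has_derivative_scaleR[OF has_st_deriv has_st_deriv]] .

lemma
  fixes f :: "('n::finite, 'b::real_normed_vector^'m::finite) field"
  assumes f: "st_differentiable f t x"
  shows st_differentiable_nth: "st_differentiable (\<lambda>s y. f s y $ k) t x"
    and pd_nth: "pd i (\<lambda>s y. f s y $ k) t x = pd i f t x $ k"
    and dt_nth: "dt (\<lambda>s y. f s y $ k) t x = dt f t x $ k"
  using st_derivative_rules[where F="\<lambda>s y. f s y $ k",
      OF bounded_linear.has_derivative[OF bounded_linear_vec_nth has_st_deriv[OF f]]]
  by (simp_all add: pd_st_deriv[OF f] dt_st_deriv[OF f])

lemma
  fixes f :: "('n::finite, real) field"
  assumes f: "st_differentiable f t x" and F: "(F has_real_derivative F') (at (f t x))"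
  shows st_differentiable_comp: "st_differentiable (\<lambda>s y. F (f s y)) t x"
    and pd_comp: "pd i (\<lambda>s y. F (f s y)) t x = F' * pd i f t x"
    and dt_comp: "dt (\<lambda>s y. F (f s y)) t x = F' * dt f t x"
proof -
  have "((\<lambda>z. F (f (fst z) (snd z))) has_derivative (\<lambda>h. F' * st_deriv f t x h)) (at (t, x))"
    using has_derivative_compose[OF has_st_deriv[OF f], of F "(*) F'"] F
    by (simp add: has_field_derivative_def mult.commute)
  from st_derivative_rules[where F="\<lambda>s y. F (f s y)", OF this]
  show "st_differentiable (\<lambda>s y. F (f s y)) t x"
    and "pd i (\<lambda>s y. F (f s y)) t x = F' * pd i f t x"
    and "dt (\<lambda>s y. F (f s y)) t x = F' * dt f t x"
    by (simp_all add: pd_st_deriv[OF f] dt_st_deriv[OF f])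
qed

lemma pd_add_cmult:
  fixes f g :: "('n::finite, real) field"
  assumes "st_differentiable f t x" and "st_differentiable g t x"
  shows "pd i (\<lambda>s y. f s y + c * g s y) t x = pd i f t x + c * pd i g t x"
  using assms by (simp add: pd_add pd_cmult st_differentiable_cmult)

lemma
  assumes "finite A" and f: "\<And>k. k \<in> A \<Longrightarrow> st_differentiable (f k) t x"
  shows st_differentiable_sum: "st_differentiable (\<lambda>s y. \<Sum>k\<in>A. f k s y) t x"
    and pd_sum: "pd i (\<lambda>s y. \<Sum>k\<in>A. f k s y) t x = (\<Sum>k\<in>A. pd i (f k) t x)"
  using st_derivative_rules[where F="\<lambda>s y. \<Sum>k\<in>A. f k s y",
      OF has_derivative_sum[of A "\<lambda>k z. f k (fst z) (snd z)", OF has_st_deriv[OF f]]]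
  by (simp_all add: pd_st_deriv[OF f])

lemma bounded_linear_axis_embedding:
  "bounded_linear (\<lambda>v. \<chi> j. if j = k then v else 0 :: 'b::real_normed_vector^'m::finite)"
proof (rule bounded_linear_intro[where K=1])
  fix v :: 'b
  have "norm (\<chi> j. if j = k then v else 0 :: 'b^'m) \<le> (\<Sum>j\<in>UNIV. norm ((\<chi> j. if j = k then v else 0 :: 'b^'m) $ j))"
    unfolding norm_vec_def by (rule L2_set_le_sum) auto
  also have "\<dots> = norm v" by (simp add: if_distrib cong: if_cong)
  finally show "norm (\<chi> j. if j = k then v else 0 :: 'b^'m) \<le> norm v * 1" by simp
qed (simp_all add: vec_eq_iff)

lemma st_differentiable_vec_lambda:
  fixes f :: "'m::finite \<Rightarrow> ('n::finite, 'b::real_normed_vector) field"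
  assumes f: "\<And>k. st_differentiable (f k) t x"
  shows "st_differentiable (\<lambda>s y. \<chi> k. f k s y) t x"
proof -
  have "st_differentiable (\<lambda>s y. \<Sum>k\<in>UNIV. \<chi> j. if j = k then f k s y else 0 :: 'b^'m) t x"
    using st_derivative_rules(1)[OF bounded_linear.has_derivative[OF bounded_linear_axis_embedding
        has_st_deriv[OF f]]]
    by (intro st_differentiable_sum) simp_all
  moreover have "(\<Sum>k\<in>UNIV. \<chi> j. if j = k then a k else 0) = ((\<chi> k. a k) :: 'b^'m)" for a :: "'m \<Rightarrow> 'b"
    by (simp add: vec_eq_iff sum_component if_distrib cong: if_cong)
  ultimately show ?thesis by simp
qed

lemma st_differentiable_componentwise:
  fixes F :: "('n::finite, 'b::real_normed_vector^'m::finite) field"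
  assumes "\<And>k. st_differentiable (\<lambda>s y. F s y $ k) t x"
  shows "st_differentiable F t x"
  using st_differentiable_vec_lambda[of "\<lambda>k s y. F s y $ k", OF assms] by simp

lemma grad_nth: "grad f t x $ i = pd i f t x"
  by (simp add: grad_def)

lemma divM_nth:
  fixes M :: "('n::finite, real^'n^'n) field"
  assumes M: "st_differentiable M t x"
  shows "divM M t x $ i = (\<Sum>j\<in>UNIV. pd j (\<lambda>s y. M s y $ i $ j) t x)"
  unfolding divM_def
  using pd_nth[OF M] pd_nth[OF st_differentiable_nth[OF M]] by simp

lemma divM_nth_entries:
  fixes M :: "('n::finite, real^'n^'n) field"
  assumes I: "open I" "t \<in> I" and M: "\<And>s y a b. s \<in> I \<Longrightarrow> M s y $ a $ b = F a b s y"
    and F: "\<And>a b. st_differentiable (F a b) t x"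
  shows "divM M t x $ i = (\<Sum>j\<in>UNIV. pd j (F i j) t x)"
proof -
  have "st_differentiable M t x"
    by (intro st_differentiable_componentwise st_differentiable_cong_open[OF I _ F]) (simp add: M)
  then show ?thesis
    using M[OF I(2)] by (simp add: divM_nth cong: pd_cong_slice)
qed

lemma lap_nth:
  fixes F :: "('n::finite, real^'m::finite) field"
  assumes I: "open I" "t \<in> I" and F: "\<And>s y. s \<in> I \<Longrightarrow> st_differentiable F s y"
    and F': "\<And>j k. st_differentiable (pd j (\<lambda>s y. F s y $ k)) t x"
  shows "lap F t x $ i = (\<Sum>j\<in>UNIV. pd j (pd j (\<lambda>s y. F s y $ i)) t x)"
proof -
  have pd_F: "pd j F s y = (\<chi> k. pd j (\<lambda>s y. F s y $ k) s y)" if "s \<in> I" for j s y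
    using pd_nth[OF F[OF that]] by (simp add: vec_eq_iff)
  have "st_differentiable (pd j F) t x" for j
    by (rule st_differentiable_cong_open[OF I, where g="\<lambda>s y. \<chi> k. pd j (\<lambda>s y. F s y $ k) s y"])
       (auto simp: pd_F intro!: st_differentiable_vec_lambda F')
  then have "pd j (pd j F) t x $ i = pd j (pd j (\<lambda>s y. F s y $ i)) t x" for j
    using pd_cong_slice[of "\<lambda>s y. pd j F s y $ i" t "pd j (\<lambda>s y. F s y $ i)"]
      pd_nth[OF F[OF I(2)]] pd_nth[of "pd j F" t x j i] by simp
  then show ?thesis unfolding lap_def by simp
qed

lemma
  fixes f :: "('n::finite, real) field"
  assumes I: "open I" "t \<in> I" and f: "\<And>s y. s \<in> I \<Longrightarrow> st_differentiable f s y"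
    and fi: "st_differentiable (pd i f) t x"
  shows pd_commute: "st_differentiable (pd j f) t x \<Longrightarrow> pd j (pd i f) t x = pd i (pd j f) t x"
    and dt_pd_commute: "st_differentiable (dt f) t x \<Longrightarrow> dt (pd i f) t x = pd i (dt f) t x"
proof -
  let ?F = "\<lambda>z. f (fst z) (snd z)"
  have S: "open (I \<times> (UNIV :: (real^'n) set))" "(t, x) \<in> I \<times> UNIV"
    using I by (auto intro: open_Times)
  have along_pd: "((\<lambda>\<sigma>. ?F (z + \<sigma> *\<^sub>R (0, axis k 1))) has_real_derivative pd k f (fst z) (snd z)) (at 0)"
    if "z \<in> I \<times> UNIV" for z k
    using that has_vector_derivative_pd[OF has_st_deriv[OF f], of "fst z" "snd z" k] pd_st_deriv[OF f]
    by (auto simp: has_real_derivative_iff_has_vector_derivative)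
  have along_dt: "((\<lambda>\<sigma>. ?F (z + \<sigma> *\<^sub>R (1, 0))) has_real_derivative dt f (fst z) (snd z)) (at 0)"
    if "z \<in> I \<times> UNIV" for z
  proof -
    have "((\<lambda>\<sigma>. f \<sigma> (snd z)) has_real_derivative dt f (fst z) (snd z)) (at (fst z))"
      using that has_vector_derivative_dt[OF has_st_deriv[OF f], of "fst z" "snd z"] dt_st_deriv[OF f]
      by (auto simp: has_real_derivative_iff_has_vector_derivative)
    then show ?thesis
      using DERIV_shift[of "\<lambda>\<sigma>. f \<sigma> (snd z)" _ 0 "fst z"] by (simp add: add.commute)
  qed
  show "pd j (pd i f) t x = pd i (pd j f) t x" if fj: "st_differentiable (pd j f) t x"
    using mixed_directional_derivatives_commute[OF S along_pd along_pd has_st_deriv[OF fi] has_st_deriv[OF fj]]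
    by (simp add: pd_st_deriv[OF fi] pd_st_deriv[OF fj])
  show "dt (pd i f) t x = pd i (dt f) t x" if ft: "st_differentiable (dt f) t x"
    using mixed_directional_derivatives_commute[OF S along_pd along_dt has_st_deriv[OF fi] has_st_deriv[OF ft]]
    by (simp add: dt_st_deriv[OF fi] pd_st_deriv[OF ft])
qed

section \<open>The viscosity profile \<open>h\<^sub>\<epsilon>\<close>\<close>

text \<open>Closed forms on \<open>r > 0\<close> of \<open>h\<^sub>\<epsilon>'\<close> (\<open>hp_eps\<close> itself is defined through \<open>deriv\<close>),
  \<open>h\<^sub>\<epsilon>''\<close>, \<open>\<phi>\<^sub>\<epsilon>' = h\<^sub>\<epsilon>'/r\<close>, \<open>\<phi>\<^sub>\<epsilon>''\<close> and of the first two derivatives of \<open>sqrt\<close>.\<close>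

definition dh_eps :: "real \<Rightarrow> real \<Rightarrow> real \<Rightarrow> real" where
  "dh_eps \<gamma> \<epsilon> r = 1 + \<epsilon> * (7/8 * r powr (7/8 - 1)) + \<epsilon> * (\<gamma> * r powr (\<gamma> - 1))"

definition d2h_eps :: "real \<Rightarrow> real \<Rightarrow> real \<Rightarrow> real" where
  "d2h_eps \<gamma> \<epsilon> r = \<epsilon> * (7/8 * ((7/8 - 1) * r powr (7/8 - 1 - 1))) + \<epsilon> * (\<gamma> * ((\<gamma> - 1) * r powr (\<gamma> - 1 - 1)))"

definition dphi_eps :: "real \<Rightarrow> real \<Rightarrow> real \<Rightarrow> real" where
  "dphi_eps \<gamma> \<epsilon> r = dh_eps \<gamma> \<epsilon> r / r"

definition d2phi_eps :: "real \<Rightarrow> real \<Rightarrow> real \<Rightarrow> real" where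
  "d2phi_eps \<gamma> \<epsilon> r = d2h_eps \<gamma> \<epsilon> r / r - dh_eps \<gamma> \<epsilon> r / r\<^sup>2"

definition dsqrt :: "real \<Rightarrow> real" where
  "dsqrt r = inverse (sqrt r) / 2"

definition d2sqrt :: "real \<Rightarrow> real" where
  "d2sqrt r = - inverse (sqrt r) / (4 * r)"

lemma has_real_derivative_h_eps_dh_eps: "0 < r \<Longrightarrow> (h_eps \<gamma> \<epsilon> has_real_derivative dh_eps \<gamma> \<epsilon> r) (at r)"
  unfolding h_eps_def[abs_def] dh_eps_def
  by (intro DERIV_add DERIV_cmult DERIV_ident DERIV_const has_real_derivative_powr)

lemma hp_eps_eq: "0 < r \<Longrightarrow> hp_eps \<gamma> \<epsilon> r = dh_eps \<gamma> \<epsilon> r"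
  unfolding hp_eps_def using has_real_derivative_h_eps_dh_eps DERIV_imp_deriv by blast

lemma has_real_derivative_h_eps: "0 < r \<Longrightarrow> (h_eps \<gamma> \<epsilon> has_real_derivative hp_eps \<gamma> \<epsilon> r) (at r)"
  using has_real_derivative_h_eps_dh_eps hp_eps_eq by metis

lemma has_real_derivative_dh_eps: "0 < r \<Longrightarrow> (dh_eps \<gamma> \<epsilon> has_real_derivative d2h_eps \<gamma> \<epsilon> r) (at r)"
  unfolding dh_eps_def[abs_def] d2h_eps_def
  by (rule derivative_eq_intros has_real_derivative_powr refl | simp)+

lemma has_real_derivative_hp_eps: "0 < r \<Longrightarrow> (hp_eps \<gamma> \<epsilon> has_real_derivative d2h_eps \<gamma> \<epsilon> r) (at r)"
  using has_field_derivative_transform_within_open[OF has_real_derivative_dh_eps, of r "{0<..}"]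
  by (simp add: hp_eps_eq)

lemma has_real_derivative_dphi_eps: "0 < r \<Longrightarrow> (dphi_eps \<gamma> \<epsilon> has_real_derivative d2phi_eps \<gamma> \<epsilon> r) (at r)"
  unfolding dphi_eps_def[abs_def] d2phi_eps_def
  by (auto intro!: derivative_eq_intros has_real_derivative_dh_eps simp: field_simps power2_eq_square)

lemma differentiable_d2phi_eps: "0 < r \<Longrightarrow> d2phi_eps \<gamma> \<epsilon> differentiable (at r)"
  unfolding d2phi_eps_def[abs_def] d2h_eps_def dh_eps_def real_differentiable_def
  by (intro exI) (rule derivative_eq_intros has_real_derivative_powr refl | simp)+

lemma has_real_derivative_g_eps: "0 < r \<Longrightarrow> (g_eps \<gamma> \<epsilon> has_real_derivative r * d2h_eps \<gamma> \<epsilon> r) (at r)"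
  unfolding g_eps_def[abs_def]
  by (rule derivative_eq_intros has_real_derivative_hp_eps has_real_derivative_h_eps refl | simp)+

lemma has_real_derivative_dsqrt: "0 < r \<Longrightarrow> (dsqrt has_real_derivative d2sqrt r) (at r)"
  unfolding dsqrt_def[abs_def] d2sqrt_def
  by (rule derivative_eq_intros refl | simp)+ (simp add: field_simps power2_eq_square flip: real_sqrt_mult)

lemma mu_pos: "0 < \<kappa> \<Longrightarrow> \<kappa> < \<nu> \<Longrightarrow> 0 < mu \<nu> \<kappa>"
  unfolding mu_def using real_sqrt_less_mono[of "\<nu>\<^sup>2 - \<kappa>\<^sup>2" "\<nu>\<^sup>2"] by simp

lemma korteweg_algebra:
  fixes r h1 h2 a b :: real
  assumes r: "0 < r"
  shows "h1 * (h1 * (dsqrt r * b + d2sqrt r * a * a) + h2 * a * (dsqrt r * a)) / sqrt r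
       = (h1 * (h1 / r * b + (h2 / r - h1 / r\<^sup>2) * a * a) + 1/2 * (h1 / r * a) * (h1 / r * a)) / 2"
proof -
  have "sqrt r * sqrt r = r" "0 < sqrt r" using r by simp_all
  then show ?thesis
    unfolding dsqrt_def d2sqrt_def by (simp add: field_simps power2_eq_square)
qed

lemma momentum_expansion_algebra:
  fixes \<nu> \<kappa> c m dtu flux conv0 conv1 conv2 lap_u lap_w visc_u visc_w gGu gGw gR gP K damp Ui Wi :: real
  assumes original: "dtu + conv0 - 2 * \<nu> * (visc_u + gGu) + (gR + gP) + damp * Ui = \<kappa>\<^sup>2 * K"
    and first_order: "lap_u = 2 * visc_u + conv1 + gGu - flux"
    and second_order: "lap_w = conv2 + visc_w"
    and korteweg: "K = visc_w + gGw"
    and damping: "damp * (c * Wi) = c / m * gP" and m: "m \<noteq> 0"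
  shows "(dtu - c * flux) + (conv0 + c * conv1 + c\<^sup>2 * conv2) + gR + (m - c) / m * gP
       - c * (lap_u + c * lap_w) + damp * (Ui + c * Wi) - (2 * (\<nu> - c)) * (visc_u + c * visc_w)
       - (2 * \<nu> - c) * (gGu + c * gGw) - (\<kappa>\<^sup>2 - 2 * \<nu> * c + c\<^sup>2) * K = 0"
proof -
  have "(dtu - c * flux) + (conv0 + c * conv1 + c\<^sup>2 * conv2) + gR + (m - c) / m * gP
       - c * (lap_u + c * lap_w) + damp * (Ui + c * Wi) - (2 * (\<nu> - c)) * (visc_u + c * visc_w)
       - (2 * \<nu> - c) * (gGu + c * gGw) - (\<kappa>\<^sup>2 - 2 * \<nu> * c + c\<^sup>2) * K
     = (dtu + conv0 - 2 * \<nu> * (visc_u + gGu) + (gR + gP) + damp * Ui - \<kappa>\<^sup>2 * K)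
       + c * (2 * visc_u + conv1 - lap_u + gGu - flux) + c\<^sup>2 * (conv2 + visc_w - lap_w)
       + (2 * \<nu> * c - c\<^sup>2) * (K - visc_w - gGw)
       + ((m - c) / m * gP + damp * (c * Wi) - gP)"
    by (simp add: algebra_simps power2_eq_square)
  also have "(m - c) / m * gP + damp * (c * Wi) - gP = 0"
    using damping m by (simp add: field_simps)
  finally show ?thesis
    using original first_order second_order korteweg by simp
qed

section \<open>Smooth positive solutions of the approximating system\<close>

locale approx_solution =
  fixes \<rho> :: "real \<Rightarrow> real^'n::finite \<Rightarrow> real" and u :: "real \<Rightarrow> real^'n \<Rightarrow> real^'n"
    and \<phi> p :: "real \<Rightarrow> real" and \<nu> \<kappa> \<gamma> \<epsilon> c T :: real
  assumes kappa_pos: "0 < \<kappa>" and kappa_less_nu: "\<kappa> < \<nu>"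
    and phi: "\<forall>r>0. \<exists>D. (\<phi> has_real_derivative D) (at r) \<and> r * D = hp_eps \<gamma> \<epsilon> r"
    and pressure: "\<forall>r>0. (p has_real_derivative mu \<nu> \<kappa> * ptil_eps \<epsilon> r * hp_eps \<gamma> \<epsilon> r / r) (at r)"
    and smooth_rho: "smooth_st {0<..<T} \<rho>" and smooth_u: "smooth_st {0<..<T} u"
    and rho_pos: "\<And>t x. 0 < \<rho> t x"
    and mass: "\<forall>t\<in>{0<..<T}. \<forall>x. dt \<rho> t x + divg (\<lambda>s y. \<rho> s y *\<^sub>R u s y) t x = 0"
    and momentum: "\<forall>t\<in>{0<..<T}. \<forall>x.
        dt (\<lambda>s y. \<rho> s y *\<^sub>R u s y) t x
        + divM (\<lambda>s y. \<rho> s y *\<^sub>R outer (u s y) (u s y)) t x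
        - (2 * \<nu>) *\<^sub>R divM (stress \<gamma> \<epsilon> \<rho> u) t x
        + grad (\<lambda>s y. \<rho> s y powr \<gamma> + p (\<rho> s y)) t x
        + ptil_eps \<epsilon> (\<rho> t x) *\<^sub>R u t x
        = \<kappa>\<^sup>2 *\<^sub>R divK \<gamma> \<epsilon> \<rho> t x"
begin

abbreviation "I \<equiv> {0<..<T}"
abbreviation "H \<equiv> \<lambda>s y. h_eps \<gamma> \<epsilon> (\<rho> s y)"
abbreviation "Hp \<equiv> \<lambda>s y. hp_eps \<gamma> \<epsilon> (\<rho> s y)"
abbreviation "G \<equiv> \<lambda>s y. g_eps \<gamma> \<epsilon> (\<rho> s y)"
abbreviation "\<Phi> \<equiv> \<lambda>s y. \<phi> (\<rho> s y)"
abbreviation "Sq \<equiv> \<lambda>s y. sqrt (\<rho> s y)"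
abbreviation "U k \<equiv> \<lambda>s y. u s y $ k"
abbreviation "V \<equiv> \<lambda>s y. u s y + c *\<^sub>R grad \<Phi> s y"
abbreviation "mass_flux_div \<equiv> divg (\<lambda>s y. \<rho> s y *\<^sub>R u s y)"

lemma has_real_derivative_phi: "0 < r \<Longrightarrow> (\<phi> has_real_derivative dphi_eps \<gamma> \<epsilon> r) (at r)"
proof -
  assume r: "0 < r"
  obtain D where D: "(\<phi> has_real_derivative D) (at r)" "r * D = hp_eps \<gamma> \<epsilon> r"
    using phi r by blast
  have "D = dphi_eps \<gamma> \<epsilon> r" using D(2) r hp_eps_eq[OF r] by (simp add: dphi_eps_def field_simps)
  with D show ?thesis by simp
qed

lemma profiles_differentiable:
  assumes "0 < r"
  shows "h_eps \<gamma> \<epsilon> differentiable (at r)" "hp_eps \<gamma> \<epsilon> differentiable (at r)"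
    "g_eps \<gamma> \<epsilon> differentiable (at r)" "\<phi> differentiable (at r)"
    "dphi_eps \<gamma> \<epsilon> differentiable (at r)" "d2phi_eps \<gamma> \<epsilon> differentiable (at r)"
    "p differentiable (at r)" "sqrt differentiable (at r)" "dsqrt differentiable (at r)"
    "(\<lambda>r. r powr \<gamma>) differentiable (at r)"
  using assms differentiable_d2phi_eps
  by (auto intro!: differentiableI has_field_derivative_imp_has_derivative
      has_real_derivative_h_eps has_real_derivative_hp_eps has_real_derivative_g_eps
      has_real_derivative_phi has_real_derivative_dphi_eps pressure[rule_format]
      DERIV_real_sqrt has_real_derivative_dsqrt has_real_derivative_powr)

lemma differentiable_rho: "s \<in> I \<Longrightarrow> st_differentiable \<rho> s y"
  by (rule st_differentiable_if_smooth[OF smooth_rho])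

lemma differentiable_pd_rho: "s \<in> I \<Longrightarrow> st_differentiable (pd i \<rho>) s y"
  by (rule st_differentiable_if_smooth[OF smooth_st_pd[OF smooth_rho]])

lemma differentiable_pd2_rho: "s \<in> I \<Longrightarrow> st_differentiable (pd j (pd i \<rho>)) s y"
  by (rule st_differentiable_if_smooth[OF smooth_st_pd[OF smooth_st_pd[OF smooth_rho]]])

lemma differentiable_dt_rho: "s \<in> I \<Longrightarrow> st_differentiable (dt \<rho>) s y"
  by (rule st_differentiable_if_smooth[OF smooth_st_dt[OF smooth_rho]])

lemma differentiable_u: "s \<in> I \<Longrightarrow> st_differentiable u s y"
  by (rule st_differentiable_if_smooth[OF smooth_u])

lemma differentiable_U: "s \<in> I \<Longrightarrow> st_differentiable (U k) s y"
  by (rule st_differentiable_nth[OF differentiable_u])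

lemma pd_U: "s \<in> I \<Longrightarrow> pd i (U k) s y = pd i u s y $ k"
  by (rule pd_nth[OF differentiable_u])

lemma differentiable_pd_U: "s \<in> I \<Longrightarrow> st_differentiable (pd i (U k)) s y"
  by (rule st_differentiable_cong_open[OF open_greaterThanLessThan, where g="\<lambda>s y. pd i u s y $ k"])
     (auto simp: pd_U intro!: st_differentiable_nth st_differentiable_if_smooth[OF smooth_st_pd[OF smooth_u]])

lemma differentiable_profile:
  fixes F :: "real \<Rightarrow> real"
  assumes "s \<in> I" and "\<And>r. 0 < r \<Longrightarrow> F differentiable (at r)"
  shows "st_differentiable (\<lambda>s y. F (\<rho> s y)) s y"
proof -
  obtain D where "(F has_real_derivative D) (at (\<rho> s y))"
    using assms(2)[OF rho_pos] by (auto simp: real_differentiable_def)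
  then show ?thesis by (rule st_differentiable_comp[OF differentiable_rho[OF assms(1)]])
qed

lemma pd_profile:
  "s \<in> I \<Longrightarrow> (\<And>r. 0 < r \<Longrightarrow> (F has_real_derivative F' r) (at r))
    \<Longrightarrow> pd i (\<lambda>s y. F (\<rho> s y)) s y = F' (\<rho> s y) * pd i \<rho> s y"
  using pd_comp[OF differentiable_rho] rho_pos by blast

lemmas pd_H = pd_profile[OF _ has_real_derivative_h_eps]
lemmas pd_Hp = pd_profile[OF _ has_real_derivative_hp_eps]
lemmas pd_Phi = pd_profile[OF _ has_real_derivative_phi]
lemmas pd_Sq = pd_profile[OF _ DERIV_real_sqrt[folded dsqrt_def]]

lemma dt_H: "s \<in> I \<Longrightarrow> dt H s y = Hp s y * dt \<rho> s y"
  by (rule dt_comp[OF differentiable_rho has_real_derivative_h_eps[OF rho_pos]])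

text \<open>Differentiability of a derivative is read off from its explicit formula, which holds on the
  whole open slab \<open>I \<times> \<real>\<^sup>n\<close>.\<close>
lemma differentiable_pd_profile:
  assumes "s \<in> I" and F: "\<And>r. 0 < r \<Longrightarrow> (F has_real_derivative F' r) (at r)"
    and F': "\<And>r. 0 < r \<Longrightarrow> F' differentiable (at r)"
  shows "st_differentiable (pd i (\<lambda>s y. F (\<rho> s y))) s y"
  by (rule st_differentiable_cong_open[OF open_greaterThanLessThan, where g="\<lambda>s y. F' (\<rho> s y) * pd i \<rho> s y"])
     (use assms in \<open>auto simp: pd_profile
        intro!: st_differentiable_mult differentiable_profile differentiable_pd_rho\<close>)

lemmas differentiable_pd_H = differentiable_pd_profile[OF _ has_real_derivative_h_eps profiles_differentiable(2)]
lemmas differentiable_pd_Phi = differentiable_pd_profile[OF _ has_real_derivative_phi profiles_differentiable(5)]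
lemmas differentiable_pd_Sq =
  differentiable_pd_profile[OF _ DERIV_real_sqrt[folded dsqrt_def] profiles_differentiable(9)]

lemma pd2_profile:
  assumes s: "s \<in> I" and F: "\<And>r. 0 < r \<Longrightarrow> (F has_real_derivative F' r) (at r)"
    and F': "\<And>r. 0 < r \<Longrightarrow> (F' has_real_derivative F'' r) (at r)"
  shows "pd j (pd i (\<lambda>s y. F (\<rho> s y))) s y
    = F' (\<rho> s y) * pd j (pd i \<rho>) s y + F'' (\<rho> s y) * pd j \<rho> s y * pd i \<rho> s y"
proof -
  have "pd j (pd i (\<lambda>s y. F (\<rho> s y))) s y = pd j (\<lambda>s y. F' (\<rho> s y) * pd i \<rho> s y) s y"
    by (rule pd_cong_slice) (rule pd_profile[OF s F])
  also have "\<dots> = F' (\<rho> s y) * pd j (pd i \<rho>) s y + pd j (\<lambda>s y. F' (\<rho> s y)) s y * pd i \<rho> s y"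
    using F' by (intro pd_mult differentiable_profile differentiable_pd_rho s) (auto simp: real_differentiable_def)
  finally show ?thesis using pd_profile[OF s F'] by simp
qed

lemmas pd2_Phi = pd2_profile[OF _ has_real_derivative_phi has_real_derivative_dphi_eps]
lemmas pd2_Sq = pd2_profile[OF _ DERIV_real_sqrt[folded dsqrt_def] has_real_derivative_dsqrt]

lemma differentiable_pd2_Phi: "s \<in> I \<Longrightarrow> st_differentiable (pd j (pd i \<Phi>)) s y"
  by (rule st_differentiable_cong_open[OF open_greaterThanLessThan,
        where g="\<lambda>s y. dphi_eps \<gamma> \<epsilon> (\<rho> s y) * pd j (pd i \<rho>) s y + d2phi_eps \<gamma> \<epsilon> (\<rho> s y) * pd j \<rho> s y * pd i \<rho> s y"])
     (auto simp: pd2_Phi intro!: st_differentiable_mult st_differentiable_add differentiable_profile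
        profiles_differentiable differentiable_pd_rho differentiable_pd2_rho)

lemma pd_Phi_commute: "s \<in> I \<Longrightarrow> pd j (pd i \<Phi>) s y = pd i (pd j \<Phi>) s y"
  by (rule pd_commute[OF open_greaterThanLessThan])
     (auto intro!: differentiable_profile profiles_differentiable differentiable_pd_Phi)

lemma pd2_Phi_commute: "s \<in> I \<Longrightarrow> pd j (pd i (pd k \<Phi>)) s y = pd i (pd j (pd k \<Phi>)) s y"
  by (rule pd_commute[OF open_greaterThanLessThan]) (auto intro!: differentiable_pd_Phi differentiable_pd2_Phi)

text \<open>This is where the defining property \<open>r \<phi>'(r) = h'(r)\<close> of \<open>\<phi>\<close> enters.\<close>
lemma rho_pd_Phi: "s \<in> I \<Longrightarrow> \<rho> s y * pd i \<Phi> s y = pd i H s y"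
  using rho_pos[of s y] by (simp add: pd_Phi pd_H hp_eps_eq dphi_eps_def)

lemma V_nth: "V s y $ k = U k s y + c * pd k \<Phi> s y"
  by (simp add: grad_def)

lemma rho_V_nth: "s \<in> I \<Longrightarrow> (\<rho> s y *\<^sub>R V s y) $ k = \<rho> s y * U k s y + c * pd k H s y"
  using rho_pd_Phi[of s y k] by (simp add: grad_def algebra_simps)

lemma differentiable_grad_Phi: "s \<in> I \<Longrightarrow> st_differentiable (grad \<Phi>) s y"
  unfolding grad_def by (auto intro!: st_differentiable_vec_lambda differentiable_pd_Phi)

lemma differentiable_V: "s \<in> I \<Longrightarrow> st_differentiable V s y"
  by (auto intro!: st_differentiable_add st_differentiable_scaleR_const differentiable_u differentiable_grad_Phi)

lemma differentiable_rho_u: "s \<in> I \<Longrightarrow> st_differentiable (\<lambda>s y. \<rho> s y *\<^sub>R u s y) s y"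
  by (auto intro!: st_differentiable_scaleR differentiable_u differentiable_rho)

lemma differentiable_rho_V: "s \<in> I \<Longrightarrow> st_differentiable (\<lambda>s y. \<rho> s y *\<^sub>R V s y) s y"
  by (auto intro!: st_differentiable_scaleR differentiable_V differentiable_rho)

lemma mass_V:
  assumes t: "t \<in> I"
  shows "dt \<rho> t x + divg (\<lambda>s y. \<rho> s y *\<^sub>R V s y) t x = c * lap H t x"
proof -
  have "pd i (\<lambda>s y. \<rho> s y *\<^sub>R V s y) t x $ i = pd i (\<lambda>s y. \<rho> s y *\<^sub>R u s y) t x $ i + c * pd i (pd i H) t x" for i
  proof -
    have "pd i (\<lambda>s y. \<rho> s y *\<^sub>R V s y) t x $ i = pd i (\<lambda>s y. (\<rho> s y *\<^sub>R V s y) $ i) t x"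
      by (rule pd_nth[OF differentiable_rho_V[OF t], symmetric])
    also have "\<dots> = pd i (\<lambda>s y. \<rho> s y * U i s y + c * pd i H s y) t x"
      by (rule pd_cong_slice) (rule rho_V_nth[OF t])
    also have "\<dots> = pd i (\<lambda>s y. \<rho> s y * U i s y) t x + c * pd i (pd i H) t x"
      using t by (simp add: pd_add pd_cmult st_differentiable_mult st_differentiable_cmult
          differentiable_rho differentiable_U differentiable_pd_H)
    also have "pd i (\<lambda>s y. \<rho> s y * U i s y) t x = pd i (\<lambda>s y. \<rho> s y *\<^sub>R u s y) t x $ i"
      using pd_nth[OF differentiable_rho_u[OF t], of i i] by simp
    finally show ?thesis .
  qed
  then have "divg (\<lambda>s y. \<rho> s y *\<^sub>R V s y) t x = mass_flux_div t x + c * lap H t x"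
    unfolding divg_def lap_def by (simp add: sum.distrib sum_distrib_left)
  then show ?thesis using mass t by simp
qed

section \<open>The momentum terms for the effective velocity\<close>

lemma differentiable_mass_flux_div:
  assumes s: "s \<in> I" shows "st_differentiable mass_flux_div s y"
proof -
  have "st_differentiable (\<lambda>s y. (-1) * dt \<rho> s y) s y"
    by (rule st_differentiable_cmult[OF differentiable_dt_rho[OF s]])
  then show ?thesis
    by (rule st_differentiable_cong_open[OF open_greaterThanLessThan s, rotated])
       (use mass in \<open>auto simp: add_eq_0_iff\<close>)
qed

lemma differentiable_Hp_mass_flux_div: "s \<in> I \<Longrightarrow> st_differentiable (\<lambda>s y. Hp s y * mass_flux_div s y) s y"
  by (intro st_differentiable_mult differentiable_profile profiles_differentiable differentiable_mass_flux_div)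

lemma dt_rho_V_nth:
  assumes t: "t \<in> I"
  shows "dt (\<lambda>s y. \<rho> s y *\<^sub>R V s y) t x $ i
     = dt (\<lambda>s y. \<rho> s y *\<^sub>R u s y) t x $ i - c * pd i (\<lambda>s y. Hp s y * mass_flux_div s y) t x"
proof -
  have "dt (\<lambda>s y. \<rho> s y *\<^sub>R V s y) t x $ i = dt (\<lambda>s y. (\<rho> s y *\<^sub>R V s y) $ i) t x"
    by (rule dt_nth[OF differentiable_rho_V[OF t], symmetric])
  also have "\<dots> = dt (\<lambda>s y. \<rho> s y * U i s y + c * pd i H s y) t x"
    by (rule dt_cong_open[OF open_greaterThanLessThan t]) (rule rho_V_nth)
  also have "\<dots> = dt (\<lambda>s y. \<rho> s y *\<^sub>R u s y) t x $ i + c * dt (pd i H) t x"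
    using t dt_nth[OF differentiable_rho_u[OF t], of i]
    by (simp add: dt_add dt_cmult st_differentiable_mult st_differentiable_cmult
        differentiable_rho differentiable_U differentiable_pd_H)
  also have "dt (pd i H) t x = pd i (dt H) t x"
    by (rule dt_pd_commute[OF open_greaterThanLessThan t])
       (auto intro!: differentiable_profile profiles_differentiable differentiable_pd_H
          st_differentiable_cong_open[OF open_greaterThanLessThan t dt_H]
          st_differentiable_mult differentiable_dt_rho t)
  also have "\<dots> = pd i (\<lambda>s y. (-1) * (Hp s y * mass_flux_div s y)) t x"
    by (rule pd_cong_slice) (use dt_H[OF t] mass t in \<open>simp add: add_eq_0_iff\<close>)
  also have "\<dots> = - pd i (\<lambda>s y. Hp s y * mass_flux_div s y) t x"
    using pd_cmult[OF differentiable_Hp_mass_flux_div[OF t], of i "-1"] by simp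
  finally show ?thesis by simp
qed

lemma divM_convection_V_nth:
  assumes t: "t \<in> I"
  shows "divM (\<lambda>s y. \<rho> s y *\<^sub>R outer (V s y) (V s y)) t x $ i
     = (\<Sum>j\<in>UNIV. pd j (\<lambda>s y. \<rho> s y * (U i s y * U j s y)) t x)
     + c * (\<Sum>j\<in>UNIV. pd j (\<lambda>s y. U i s y * pd j H s y + pd i H s y * U j s y) t x)
     + c\<^sup>2 * (\<Sum>j\<in>UNIV. pd j (\<lambda>s y. pd i \<Phi> s y * pd j H s y) t x)"
proof -
  have d0: "st_differentiable (\<lambda>s y. \<rho> s y * (U a s y * U b s y)) t x" for a b
    by (intro st_differentiable_mult differentiable_rho differentiable_U t)
  have d1: "st_differentiable (\<lambda>s y. U a s y * pd b H s y + pd a H s y * U b s y) t x" for a b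
    by (intro st_differentiable_add st_differentiable_mult differentiable_U differentiable_pd_H t)
  have d2: "st_differentiable (\<lambda>s y. pd a \<Phi> s y * pd b H s y) t x" for a b
    by (intro st_differentiable_mult differentiable_pd_Phi differentiable_pd_H t)
  have "divM (\<lambda>s y. \<rho> s y *\<^sub>R outer (V s y) (V s y)) t x $ i
    = (\<Sum>j\<in>UNIV. pd j (\<lambda>s y. \<rho> s y * (U i s y * U j s y)
         + c * (U i s y * pd j H s y + pd i H s y * U j s y) + c\<^sup>2 * (pd i \<Phi> s y * pd j H s y)) t x)"
  proof (rule divM_nth_entries[OF open_greaterThanLessThan t])
    show "(\<rho> s y *\<^sub>R outer (V s y) (V s y)) $ a $ b
      = \<rho> s y * (U a s y * U b s y) + c * (U a s y * pd b H s y + pd a H s y * U b s y)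
        + c\<^sup>2 * (pd a \<Phi> s y * pd b H s y)" if "s \<in> I" for s y a b
      unfolding rho_pd_Phi[OF that, symmetric] by (simp add: outer_def grad_def algebra_simps power2_eq_square)
  qed (intro st_differentiable_add st_differentiable_cmult d0 d1 d2)
  also have "\<dots> = (\<Sum>j\<in>UNIV. pd j (\<lambda>s y. \<rho> s y * (U i s y * U j s y)) t x
     + c * pd j (\<lambda>s y. U i s y * pd j H s y + pd i H s y * U j s y) t x
     + c\<^sup>2 * pd j (\<lambda>s y. pd i \<Phi> s y * pd j H s y) t x)"
    by (simp only: pd_add_cmult[OF st_differentiable_add[OF d0 st_differentiable_cmult[OF d1]] d2]
        pd_add_cmult[OF d0 d1])
  finally show ?thesis by (simp add: sum.distrib sum_distrib_left)
qed

lemma pd_G: "s \<in> I \<Longrightarrow> pd i G s y = \<rho> s y * pd i Hp s y"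
  using pd_comp[OF differentiable_rho has_real_derivative_g_eps[OF rho_pos]] pd_Hp by simp

lemma pd_H_mult:
  "s \<in> I \<Longrightarrow> st_differentiable f s y \<Longrightarrow> pd j (\<lambda>s y. H s y * f s y) s y = H s y * pd j f s y + pd j H s y * f s y"
  by (intro pd_mult differentiable_profile profiles_differentiable)

lemma differentiable_pd_H_mult:
  assumes "s \<in> I" and f: "\<And>s y. s \<in> I \<Longrightarrow> st_differentiable f s y"
    and "\<And>s y. s \<in> I \<Longrightarrow> st_differentiable (pd j f) s y"
  shows "st_differentiable (pd j (\<lambda>s y. H s y * f s y)) s y"
  by (rule st_differentiable_cong_open[OF open_greaterThanLessThan,
        where g="\<lambda>s y. H s y * pd j f s y + pd j H s y * f s y"])
     (use assms in \<open>auto simp: pd_H_mult intro!: st_differentiable_add st_differentiable_mult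
        differentiable_profile profiles_differentiable differentiable_pd_H\<close>)

lemma pd_H_U: "s \<in> I \<Longrightarrow> pd j (\<lambda>s y. H s y * U k s y) s y = H s y * pd j (U k) s y + pd j H s y * U k s y"
  by (intro pd_H_mult differentiable_U)

lemma differentiable_pd_H_U: "s \<in> I \<Longrightarrow> st_differentiable (pd j (\<lambda>s y. H s y * U k s y)) s y"
  by (intro differentiable_pd_H_mult differentiable_U differentiable_pd_U)

lemma pd_H_pd_Phi:
  "s \<in> I \<Longrightarrow> pd j (\<lambda>s y. H s y * pd k \<Phi> s y) s y = H s y * pd j (pd k \<Phi>) s y + pd j H s y * pd k \<Phi> s y"
  by (intro pd_H_mult differentiable_pd_Phi)

lemma differentiable_pd_H_pd_Phi: "s \<in> I \<Longrightarrow> st_differentiable (pd j (\<lambda>s y. H s y * pd k \<Phi> s y)) s y"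
  by (intro differentiable_pd_H_mult differentiable_pd_Phi differentiable_pd2_Phi)

lemma differentiable_H_mult: "s \<in> I \<Longrightarrow> st_differentiable f s y \<Longrightarrow> st_differentiable (\<lambda>s y. H s y * f s y) s y"
  by (intro st_differentiable_mult differentiable_profile profiles_differentiable)

lemma divg_u: "s \<in> I \<Longrightarrow> divg u s y = (\<Sum>k\<in>UNIV. pd k (U k) s y)"
  unfolding divg_def by (simp add: pd_U)

lemma differentiable_divg_u: "s \<in> I \<Longrightarrow> st_differentiable (divg u) s y"
  by (rule st_differentiable_cong_open[OF open_greaterThanLessThan, where g="\<lambda>s y. \<Sum>k\<in>UNIV. pd k (U k) s y"])
     (auto simp: divg_u intro!: st_differentiable_sum differentiable_pd_U)

lemma mass_flux_div_eq:
  assumes s: "s \<in> I"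
  shows "mass_flux_div s y = (\<Sum>k\<in>UNIV. \<rho> s y * pd k (U k) s y + pd k \<rho> s y * U k s y)"
proof -
  have "pd k (\<lambda>s y. \<rho> s y *\<^sub>R u s y) s y $ k = \<rho> s y * pd k (U k) s y + pd k \<rho> s y * U k s y" for k
    using pd_nth[OF differentiable_rho_u[OF s], of k k] pd_mult[OF differentiable_rho[OF s] differentiable_U[OF s]]
    by simp
  then show ?thesis unfolding divg_def by simp
qed

text \<open>This is where \<open>g(r) = r h'(r) - h(r)\<close> enters.\<close>
lemma G_divg_u_eq:
  assumes s: "s \<in> I"
  shows "G s y * divg u s y = Hp s y * mass_flux_div s y - (\<Sum>j\<in>UNIV. pd j (\<lambda>s y. H s y * U j s y) s y)"
proof -
  have "Hp s y * mass_flux_div s y - (\<Sum>j\<in>UNIV. pd j (\<lambda>s y. H s y * U j s y) s y) - G s y * divg u s y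
    = (\<Sum>k\<in>UNIV. Hp s y * (\<rho> s y * pd k (U k) s y + pd k \<rho> s y * U k s y)
        - (H s y * pd k (U k) s y + pd k H s y * U k s y) - G s y * pd k (U k) s y)"
    unfolding divg_u[OF s] mass_flux_div_eq[OF s]
    by (simp add: pd_H_U[OF s] sum_distrib_left sum_subtractf)
  also have "\<dots> = 0"
    by (rule sum.neutral) (simp add: pd_H[OF s] g_eps_def algebra_simps)
  finally show ?thesis by simp
qed

lemma pd_G_divg_u:
  assumes t: "t \<in> I"
  shows "pd i (\<lambda>s y. G s y * divg u s y) t x
    = pd i (\<lambda>s y. Hp s y * mass_flux_div s y) t x - (\<Sum>j\<in>UNIV. pd i (pd j (\<lambda>s y. H s y * U j s y)) t x)"
proof -
  have d1: "st_differentiable (\<lambda>s y. Hp s y * mass_flux_div s y) t x"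
    by (rule differentiable_Hp_mass_flux_div[OF t])
  have d2: "\<And>j. st_differentiable (pd j (\<lambda>s y. H s y * U j s y)) t x"
    by (rule differentiable_pd_H_U[OF t])
  have "pd i (\<lambda>s y. G s y * divg u s y) t x
    = pd i (\<lambda>s y. Hp s y * mass_flux_div s y - (\<Sum>j\<in>UNIV. pd j (\<lambda>s y. H s y * U j s y) s y)) t x"
    by (rule pd_cong_slice) (rule G_divg_u_eq[OF t])
  also have "\<dots> = pd i (\<lambda>s y. Hp s y * mass_flux_div s y) t x - (\<Sum>j\<in>UNIV. pd i (pd j (\<lambda>s y. H s y * U j s y)) t x)"
    using d2 by (simp add: pd_diff[OF d1 st_differentiable_sum] pd_sum)
  finally show ?thesis .
qed

lemma pd_V_nth:
  assumes s: "s \<in> I"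
  shows "pd k V s y $ i = pd k (U i) s y + c * pd k (pd i \<Phi>) s y"
proof -
  have "pd k V s y $ i = pd k (\<lambda>s y. V s y $ i) s y"
    by (rule pd_nth[OF differentiable_V[OF s], symmetric])
  also have "\<dots> = pd k (\<lambda>s y. U i s y + c * pd i \<Phi> s y) s y"
    by (rule pd_cong_slice) (rule V_nth)
  also have "\<dots> = pd k (U i) s y + c * pd k (pd i \<Phi>) s y"
    by (rule pd_add_cmult[OF differentiable_U[OF s] differentiable_pd_Phi[OF s]])
  finally show ?thesis .
qed

lemma divg_V: "s \<in> I \<Longrightarrow> divg V s y = divg u s y + c * lap \<Phi> s y"
  unfolding divg_def lap_def by (simp add: pd_V_nth pd_U sum.distrib sum_distrib_left)

lemma lap_H_V_nth:
  assumes t: "t \<in> I"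
  shows "lap (\<lambda>s y. H s y *\<^sub>R V s y) t x $ i
     = (\<Sum>j\<in>UNIV. pd j (pd j (\<lambda>s y. H s y * U i s y)) t x)
     + c * (\<Sum>j\<in>UNIV. pd j (pd j (\<lambda>s y. H s y * pd i \<Phi> s y)) t x)"
proof -
  have H_V_nth: "(\<lambda>s y. (H s y *\<^sub>R V s y) $ k) = (\<lambda>s y. H s y * U k s y + c * (H s y * pd k \<Phi> s y))" for k
    by (simp add: grad_def algebra_simps)
  have pd_H_V_nth: "pd j (\<lambda>s y. (H s y *\<^sub>R V s y) $ k) s y
     = pd j (\<lambda>s y. H s y * U k s y) s y + c * pd j (\<lambda>s y. H s y * pd k \<Phi> s y) s y" if "s \<in> I" for j k s y
    unfolding H_V_nth using that
    by (intro pd_add_cmult differentiable_H_mult differentiable_U differentiable_pd_Phi)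
  have "lap (\<lambda>s y. H s y *\<^sub>R V s y) t x $ i = (\<Sum>j\<in>UNIV. pd j (pd j (\<lambda>s y. (H s y *\<^sub>R V s y) $ i)) t x)"
  proof (rule lap_nth[OF open_greaterThanLessThan t])
    show "st_differentiable (\<lambda>s y. H s y *\<^sub>R V s y) s y" if "s \<in> I" for s y
      using that by (intro st_differentiable_scaleR differentiable_profile profiles_differentiable differentiable_V)
    show "st_differentiable (pd j (\<lambda>s y. (H s y *\<^sub>R V s y) $ k)) t x" for j k
      by (rule st_differentiable_cong_open[OF open_greaterThanLessThan t pd_H_V_nth
            st_differentiable_add[OF differentiable_pd_H_U[OF t]
              st_differentiable_cmult[OF differentiable_pd_H_pd_Phi[OF t]]]])
  qed
  also have "\<dots> = (\<Sum>j\<in>UNIV. pd j (pd j (\<lambda>s y. H s y * U i s y)) t x + c * pd j (pd j (\<lambda>s y. H s y * pd i \<Phi> s y)) t x)"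
  proof (rule sum.cong[OF refl])
    fix j
    have "pd j (pd j (\<lambda>s y. (H s y *\<^sub>R V s y) $ i)) t x
      = pd j (\<lambda>s y. pd j (\<lambda>s y. H s y * U i s y) s y + c * pd j (\<lambda>s y. H s y * pd i \<Phi> s y) s y) t x"
      by (rule pd_cong_slice) (rule pd_H_V_nth[OF t])
    also have "\<dots> = pd j (pd j (\<lambda>s y. H s y * U i s y)) t x + c * pd j (pd j (\<lambda>s y. H s y * pd i \<Phi> s y)) t x"
      by (rule pd_add_cmult[OF differentiable_pd_H_U[OF t] differentiable_pd_H_pd_Phi[OF t]])
    finally show "pd j (pd j (\<lambda>s y. (H s y *\<^sub>R V s y) $ i)) t x
      = pd j (pd j (\<lambda>s y. H s y * U i s y)) t x + c * pd j (pd j (\<lambda>s y. H s y * pd i \<Phi> s y)) t x" .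
  qed
  finally show ?thesis by (simp add: sum.distrib sum_distrib_left)
qed

abbreviation "H_sym F i j \<equiv> \<lambda>s y. H s y * ((pd j (F i) s y + pd i (F j) s y) / 2)"

lemma differentiable_H_sym_U: "t \<in> I \<Longrightarrow> st_differentiable (H_sym U i j) t x"
  by (intro differentiable_H_mult st_differentiable_divide_const st_differentiable_add differentiable_pd_U)

lemma differentiable_H_sym_pd_Phi: "t \<in> I \<Longrightarrow> st_differentiable (H_sym (\<lambda>k. pd k \<Phi>) i j) t x"
  by (intro differentiable_H_mult st_differentiable_divide_const st_differentiable_add differentiable_pd2_Phi)

lemma differentiable_G_divg_u: "t \<in> I \<Longrightarrow> st_differentiable (\<lambda>s y. G s y * divg u s y) t x"
  by (intro st_differentiable_mult differentiable_profile profiles_differentiable differentiable_divg_u)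

lemma divM_H_symgrad_V_nth:
  assumes t: "t \<in> I"
  shows "divM (\<lambda>s y. H s y *\<^sub>R symgrad V s y) t x $ i
     = (\<Sum>j\<in>UNIV. pd j (H_sym U i j) t x) + c * (\<Sum>j\<in>UNIV. pd j (H_sym (\<lambda>k. pd k \<Phi>) i j) t x)"
proof -
  have "divM (\<lambda>s y. H s y *\<^sub>R symgrad V s y) t x $ i
     = (\<Sum>j\<in>UNIV. pd j (\<lambda>s y. H_sym U i j s y + c * H_sym (\<lambda>k. pd k \<Phi>) i j s y) t x)"
    by (rule divM_nth_entries[OF open_greaterThanLessThan t,
          where F="\<lambda>a b s y. H_sym U a b s y + c * H_sym (\<lambda>k. pd k \<Phi>) a b s y"])
       (simp add: symgrad_def pd_V_nth field_simps,
        intro st_differentiable_add st_differentiable_cmult differentiable_H_sym_U differentiable_H_sym_pd_Phi t)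
  also have "\<dots> = (\<Sum>j\<in>UNIV. pd j (H_sym U i j) t x + c * pd j (H_sym (\<lambda>k. pd k \<Phi>) i j) t x)"
    by (intro sum.cong refl pd_add_cmult differentiable_H_sym_U differentiable_H_sym_pd_Phi t)
  finally show ?thesis by (simp add: sum.distrib sum_distrib_left)
qed

lemma divM_stress_nth:
  assumes t: "t \<in> I"
  shows "divM (stress \<gamma> \<epsilon> \<rho> u) t x $ i
     = (\<Sum>j\<in>UNIV. pd j (H_sym U i j) t x) + pd i (\<lambda>s y. G s y * divg u s y) t x"
proof -
  have "divM (stress \<gamma> \<epsilon> \<rho> u) t x $ i
     = (\<Sum>j\<in>UNIV. pd j (\<lambda>s y. H_sym U i j s y + (if i = j then 1 else 0) * (G s y * divg u s y)) t x)"
    by (rule divM_nth_entries[OF open_greaterThanLessThan t,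
          where F="\<lambda>a b s y. H_sym U a b s y + (if a = b then 1 else 0) * (G s y * divg u s y)"])
       (simp add: stress_def symgrad_def mat_def pd_U,
        intro st_differentiable_add st_differentiable_cmult differentiable_H_sym_U differentiable_G_divg_u t)
  also have "\<dots> = (\<Sum>j\<in>UNIV. pd j (H_sym U i j) t x + (if i = j then 1 else 0) * pd j (\<lambda>s y. G s y * divg u s y) t x)"
    by (intro sum.cong refl pd_add_cmult differentiable_H_sym_U differentiable_G_divg_u t)
  also have "\<dots> = (\<Sum>j\<in>UNIV. pd j (H_sym U i j) t x + (if i = j then pd j (\<lambda>s y. G s y * divg u s y) t x else 0))"
    by (intro sum.cong) simp_all
  finally show ?thesis by (simp add: sum.distrib)
qed

lemma divM_convection_u_nth:
  assumes t: "t \<in> I"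
  shows "divM (\<lambda>s y. \<rho> s y *\<^sub>R outer (u s y) (u s y)) t x $ i
    = (\<Sum>j\<in>UNIV. pd j (\<lambda>s y. \<rho> s y * (U i s y * U j s y)) t x)"
  by (rule divM_nth_entries[OF open_greaterThanLessThan t])
     (auto simp: outer_def intro!: st_differentiable_mult differentiable_rho differentiable_U t)

lemma grad_G_divg_V_nth:
  assumes t: "t \<in> I"
  shows "grad (\<lambda>s y. G s y * divg V s y) t x $ i
     = pd i (\<lambda>s y. G s y * divg u s y) t x + c * pd i (\<lambda>s y. G s y * lap \<Phi> s y) t x"
proof -
  have "grad (\<lambda>s y. G s y * divg V s y) t x $ i = pd i (\<lambda>s y. G s y * divg u s y + c * (G s y * lap \<Phi> s y)) t x"
    unfolding grad_nth by (rule pd_cong_slice) (simp add: divg_V[OF t] algebra_simps)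
  also have "\<dots> = pd i (\<lambda>s y. G s y * divg u s y) t x + c * pd i (\<lambda>s y. G s y * lap \<Phi> s y) t x"
    unfolding lap_def
    by (intro pd_add_cmult differentiable_G_divg_u t st_differentiable_mult differentiable_profile
        profiles_differentiable st_differentiable_sum differentiable_pd2_Phi) auto
  finally show ?thesis .
qed

lemma grad_pressure_nth:
  assumes t: "t \<in> I"
  shows "grad (\<lambda>s y. \<rho> s y powr \<gamma> + p (\<rho> s y)) t x $ i
    = pd i (\<lambda>s y. \<rho> s y powr \<gamma>) t x + pd i (\<lambda>s y. p (\<rho> s y)) t x"
  unfolding grad_nth
  using differentiable_profile[OF t profiles_differentiable(10)]
    differentiable_profile[OF t profiles_differentiable(7)]
  by (intro pd_add) auto

text \<open>The damping term applied to \<open>c \<nabla>\<phi>(\<rho>)\<close> is a pressure gradient, since \<open>p' = \<mu> ptil_eps \<phi>'\<close>.\<close>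
lemma ptil_pd_Phi:
  assumes t: "t \<in> I"
  shows "ptil_eps \<epsilon> (\<rho> t x) * (c * pd i \<Phi> t x) = c / mu \<nu> \<kappa> * pd i (\<lambda>s y. p (\<rho> s y)) t x"
  using rho_pos[of t x] mu_pos[OF kappa_pos kappa_less_nu] pd_profile[OF t pressure[rule_format], of i x]
  by (simp add: pd_Phi[OF t] dphi_eps_def hp_eps_eq field_simps)

section \<open>The Korteweg term\<close>

abbreviation "korteweg_flux \<equiv> \<lambda>s y. Hp s y *\<^sub>R grad Sq s y"
abbreviation "korteweg_potential \<equiv> \<lambda>s y. Hp s y * divg korteweg_flux s y / Sq s y"
abbreviation "Q \<equiv> \<lambda>s y. Hp s y * lap \<Phi> s y + 1/2 * (\<Sum>j\<in>UNIV. pd j \<Phi> s y * pd j \<Phi> s y)"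

lemma divg_korteweg_flux:
  assumes s: "s \<in> I"
  shows "divg korteweg_flux s y = (\<Sum>j\<in>UNIV. Hp s y * pd j (pd j Sq) s y + pd j Hp s y * pd j Sq s y)"
proof -
  have "st_differentiable korteweg_flux s y"
    unfolding grad_def
    by (intro st_differentiable_scaleR differentiable_profile[OF s] profiles_differentiable
        st_differentiable_vec_lambda differentiable_pd_Sq[OF s])
  then have "pd j korteweg_flux s y $ j = pd j (\<lambda>s y. Hp s y * pd j Sq s y) s y" for j
    using pd_nth[of korteweg_flux s y j j] by (simp add: grad_def)
  then show ?thesis
    unfolding divg_def
    by (simp add: pd_mult[OF differentiable_profile[OF s profiles_differentiable(2)] differentiable_pd_Sq[OF s]])
qed

lemma korteweg_potential_eq:
  assumes s: "s \<in> I"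
  shows "korteweg_potential s y = Q s y / 2"
proof -
  have r: "0 < \<rho> s y" by (rule rho_pos)
  have "korteweg_potential s y
    = (\<Sum>j\<in>UNIV. Hp s y * (Hp s y * pd j (pd j Sq) s y + pd j Hp s y * pd j Sq s y) / Sq s y)"
    unfolding divg_korteweg_flux[OF s] by (simp only: sum_distrib_left sum_divide_distrib)
  also have "\<dots> = (\<Sum>j\<in>UNIV. (Hp s y * pd j (pd j \<Phi>) s y + 1/2 * pd j \<Phi> s y * pd j \<Phi> s y) / 2)"
  proof (rule sum.cong[OF refl])
    fix j
    show "Hp s y * (Hp s y * pd j (pd j Sq) s y + pd j Hp s y * pd j Sq s y) / Sq s y
      = (Hp s y * pd j (pd j \<Phi>) s y + 1/2 * pd j \<Phi> s y * pd j \<Phi> s y) / 2"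
      using korteweg_algebra[OF r, of "Hp s y" "pd j (pd j \<rho>) s y" "pd j \<rho> s y" "d2h_eps \<gamma> \<epsilon> (\<rho> s y)"]
      by (simp only: pd2_Sq[OF s] pd_Hp[OF s] pd_Sq[OF s] pd2_Phi[OF s] pd_Phi[OF s]
          dphi_eps_def d2phi_eps_def hp_eps_eq[OF r, symmetric])
  qed
  also have "\<dots> = Q s y / 2"
    unfolding lap_def by (simp add: sum.distrib sum_distrib_left flip: sum_divide_distrib)
  finally show ?thesis .
qed

lemma differentiable_lap_Phi: "s \<in> I \<Longrightarrow> st_differentiable (lap \<Phi>) s y"
  unfolding lap_def by (intro st_differentiable_sum differentiable_pd2_Phi) auto

lemma pd_lap_Phi: "t \<in> I \<Longrightarrow> pd i (lap \<Phi>) t x = (\<Sum>j\<in>UNIV. pd i (pd j (pd j \<Phi>)) t x)"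
  unfolding lap_def by (intro pd_sum differentiable_pd2_Phi) auto

lemma pd_Q:
  assumes t: "t \<in> I"
  shows "pd i Q t x = pd i Hp t x * lap \<Phi> t x + Hp t x * pd i (lap \<Phi>) t x
     + (\<Sum>j\<in>UNIV. pd j \<Phi> t x * pd i (pd j \<Phi>) t x)"
proof -
  have dHp: "st_differentiable Hp t x"
    by (rule differentiable_profile[OF t profiles_differentiable(2)])
  have dsq: "st_differentiable (\<lambda>s y. pd j \<Phi> s y * pd j \<Phi> s y) t x" for j
    by (intro st_differentiable_mult differentiable_pd_Phi t)
  have "pd i Q t x = pd i (\<lambda>s y. Hp s y * lap \<Phi> s y) t x
      + 1/2 * pd i (\<lambda>s y. \<Sum>j\<in>UNIV. pd j \<Phi> s y * pd j \<Phi> s y) t x"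
    by (rule pd_add_cmult[OF st_differentiable_mult[OF dHp differentiable_lap_Phi[OF t]] st_differentiable_sum])
       (use dsq in auto)
  also have "pd i (\<lambda>s y. \<Sum>j\<in>UNIV. pd j \<Phi> s y * pd j \<Phi> s y) t x
      = (\<Sum>j\<in>UNIV. 2 * (pd j \<Phi> t x * pd i (pd j \<Phi>) t x))"
    using dsq pd_mult[OF differentiable_pd_Phi[OF t] differentiable_pd_Phi[OF t]] by (simp add: pd_sum)
  also have "pd i (\<lambda>s y. Hp s y * lap \<Phi> s y) t x = Hp t x * pd i (lap \<Phi>) t x + pd i Hp t x * lap \<Phi> t x"
    by (rule pd_mult[OF dHp differentiable_lap_Phi[OF t]])
  finally show ?thesis by (simp add: sum_distrib_left[symmetric])
qed

lemma divK_nth_eq: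
  assumes t: "t \<in> I"
  shows "divK \<gamma> \<epsilon> \<rho> t x $ i = \<rho> t x * pd i Q t x"
proof -
  have dQ: "st_differentiable Q t x"
    unfolding lap_def
    by (intro st_differentiable_add st_differentiable_mult st_differentiable_cmult st_differentiable_sum
        differentiable_profile[OF t] profiles_differentiable differentiable_pd_Phi differentiable_pd2_Phi t) auto
  have "pd i korteweg_potential t x = pd i (\<lambda>s y. 1/2 * Q s y) t x"
    by (rule pd_cong_slice) (simp add: korteweg_potential_eq[OF t])
  also have "\<dots> = 1/2 * pd i Q t x"
    by (rule pd_cmult[OF dQ])
  finally show ?thesis by (simp add: divK_def Let_def grad_nth)
qed

section \<open>Collecting the momentum equation by powers of \<open>c\<close>\<close>

lemma pd2_H_pd_Phi_eq:
  assumes t: "t \<in> I"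
  shows "pd j (pd j (\<lambda>s y. H s y * pd i \<Phi> s y)) t x
    = pd j (\<lambda>s y. pd i \<Phi> s y * pd j H s y) t x + pd j (H_sym (\<lambda>k. pd k \<Phi>) i j) t x"
proof -
  have "pd j (pd j (\<lambda>s y. H s y * pd i \<Phi> s y)) t x
     = pd j (\<lambda>s y. pd i \<Phi> s y * pd j H s y + H_sym (\<lambda>k. pd k \<Phi>) i j s y) t x"
    by (rule pd_cong_slice) (simp add: pd_H_pd_Phi[OF t] pd_Phi_commute[OF t, of j i] algebra_simps)
  also have "\<dots> = pd j (\<lambda>s y. pd i \<Phi> s y * pd j H s y) t x + pd j (H_sym (\<lambda>k. pd k \<Phi>) i j) t x"
    by (intro pd_add st_differentiable_mult differentiable_pd_Phi differentiable_pd_H differentiable_H_sym_pd_Phi t)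
  finally show ?thesis .
qed

lemma pd2_H_U_eq:
  assumes t: "t \<in> I"
  shows "pd j (pd j (\<lambda>s y. H s y * U i s y)) t x
    = 2 * pd j (H_sym U i j) t x + pd j (\<lambda>s y. U i s y * pd j H s y + pd i H s y * U j s y) t x
      - pd i (pd j (\<lambda>s y. H s y * U j s y)) t x"
proof -
  have dA: "st_differentiable (H_sym U i j) t x"
    by (rule differentiable_H_sym_U[OF t])
  have dB: "st_differentiable (\<lambda>s y. U i s y * pd j H s y + pd i H s y * U j s y) t x"
    by (intro st_differentiable_add st_differentiable_mult differentiable_U differentiable_pd_H t)
  have dC: "st_differentiable (\<lambda>s y. H s y * pd j (U i) s y + pd j H s y * U i s y) t x"
    by (intro st_differentiable_add st_differentiable_mult differentiable_H_mult differentiable_pd_U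
        differentiable_pd_H differentiable_U differentiable_profile profiles_differentiable t)
  have "2 * pd j (H_sym U i j) t x + pd j (\<lambda>s y. U i s y * pd j H s y + pd i H s y * U j s y) t x
     = pd j (\<lambda>s y. 2 * H_sym U i j s y + (U i s y * pd j H s y + pd i H s y * U j s y)) t x"
    using pd_add[OF st_differentiable_cmult[OF dA, of 2] dB, of j] pd_cmult[OF dA, of j 2] by simp
  also have "\<dots> = pd j (\<lambda>s y. (H s y * pd j (U i) s y + pd j H s y * U i s y)
                    + pd i (\<lambda>s y. H s y * U j s y) s y) t x"
    by (rule pd_cong_slice) (simp only: pd_H_U[OF t], simp add: algebra_simps)
  also have "\<dots> = pd j (\<lambda>s y. H s y * pd j (U i) s y + pd j H s y * U i s y) t x
      + pd j (pd i (\<lambda>s y. H s y * U j s y)) t x"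
    by (rule pd_add[OF dC differentiable_pd_H_U[OF t]])
  also have "pd j (\<lambda>s y. H s y * pd j (U i) s y + pd j H s y * U i s y) t x
      = pd j (pd j (\<lambda>s y. H s y * U i s y)) t x"
    by (rule pd_cong_slice) (rule pd_H_U[OF t, symmetric])
  also have "pd j (pd i (\<lambda>s y. H s y * U j s y)) t x = pd i (pd j (\<lambda>s y. H s y * U j s y)) t x"
    by (intro pd_commute[OF open_greaterThanLessThan t] differentiable_H_mult differentiable_U differentiable_pd_H_U t)
  finally show ?thesis by simp
qed

lemma divK_nth_viscous_form:
  assumes t: "t \<in> I"
  shows "divK \<gamma> \<epsilon> \<rho> t x $ i
    = (\<Sum>j\<in>UNIV. pd j (H_sym (\<lambda>k. pd k \<Phi>) i j) t x) + pd i (\<lambda>s y. G s y * lap \<Phi> s y) t x"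
proof -
  have sym: "pd j (H_sym (\<lambda>k. pd k \<Phi>) i j) t x
      = H t x * pd i (pd j (pd j \<Phi>)) t x + \<rho> t x * (pd j \<Phi> t x * pd i (pd j \<Phi>) t x)" for j
  proof -
    have "pd j (H_sym (\<lambda>k. pd k \<Phi>) i j) t x = pd j (\<lambda>s y. H s y * pd i (pd j \<Phi>) s y) t x"
      by (rule pd_cong_slice) (simp add: pd_Phi_commute[OF t])
    also have "\<dots> = H t x * pd j (pd i (pd j \<Phi>)) t x + pd j H t x * pd i (pd j \<Phi>) t x"
      by (intro pd_H_mult differentiable_pd2_Phi t)
    finally show ?thesis by (simp add: pd2_Phi_commute[OF t] rho_pd_Phi[OF t, symmetric])
  qed
  have G: "pd i (\<lambda>s y. G s y * lap \<Phi> s y) t x = G t x * pd i (lap \<Phi>) t x + \<rho> t x * pd i Hp t x * lap \<Phi> t x"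
    using pd_mult[OF differentiable_profile[OF t profiles_differentiable(3)] differentiable_lap_Phi[OF t], of i]
    by (simp add: pd_G[OF t])
  show ?thesis
    unfolding divK_nth_eq[OF t] pd_Q[OF t] G sym
    by (simp add: pd_lap_Phi[OF t] g_eps_def sum.distrib sum_distrib_left sum_subtractf algebra_simps)
qed

lemma momentum_u_nth:
  assumes t: "t \<in> I"
  shows "dt (\<lambda>s y. \<rho> s y *\<^sub>R u s y) t x $ i + (\<Sum>j\<in>UNIV. pd j (\<lambda>s y. \<rho> s y * (U i s y * U j s y)) t x)
      - 2 * \<nu> * ((\<Sum>j\<in>UNIV. pd j (H_sym U i j) t x) + pd i (\<lambda>s y. G s y * divg u s y) t x)
      + (pd i (\<lambda>s y. \<rho> s y powr \<gamma>) t x + pd i (\<lambda>s y. p (\<rho> s y)) t x) + ptil_eps \<epsilon> (\<rho> t x) * U i t x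
    = \<kappa>\<^sup>2 * divK \<gamma> \<epsilon> \<rho> t x $ i"
  using arg_cong[OF momentum[rule_format, OF t, of x], of "\<lambda>v. v $ i"]
  by (simp add: divM_convection_u_nth[OF t] divM_stress_nth[OF t] grad_pressure_nth[OF t])

lemma first_order_identity:
  assumes t: "t \<in> I"
  shows "(\<Sum>j\<in>UNIV. pd j (pd j (\<lambda>s y. H s y * U i s y)) t x)
    = 2 * (\<Sum>j\<in>UNIV. pd j (H_sym U i j) t x)
      + (\<Sum>j\<in>UNIV. pd j (\<lambda>s y. U i s y * pd j H s y + pd i H s y * U j s y) t x)
      + pd i (\<lambda>s y. G s y * divg u s y) t x - pd i (\<lambda>s y. Hp s y * mass_flux_div s y) t x"
  by (simp add: pd2_H_U_eq[OF t] pd_G_divg_u[OF t] sum.distrib sum_subtractf sum_distrib_left)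

lemma second_order_identity:
  assumes t: "t \<in> I"
  shows "(\<Sum>j\<in>UNIV. pd j (pd j (\<lambda>s y. H s y * pd i \<Phi> s y)) t x)
    = (\<Sum>j\<in>UNIV. pd j (\<lambda>s y. pd i \<Phi> s y * pd j H s y) t x) + (\<Sum>j\<in>UNIV. pd j (H_sym (\<lambda>k. pd k \<Phi>) i j) t x)"
  by (simp add: pd2_H_pd_Phi_eq[OF t] sum.distrib)

lemma momentum_V_nth:
  assumes t: "t \<in> I"
  shows "(dt (\<lambda>s y. \<rho> s y *\<^sub>R V s y) t x
        + divM (\<lambda>s y. \<rho> s y *\<^sub>R outer (V s y) (V s y)) t x
        + grad (\<lambda>s y. \<rho> s y powr \<gamma>) t x
        + ((mu \<nu> \<kappa> - c) / mu \<nu> \<kappa>) *\<^sub>R grad (\<lambda>s y. p (\<rho> s y)) t x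
        - c *\<^sub>R lap (\<lambda>s y. H s y *\<^sub>R V s y) t x
        + ptil_eps \<epsilon> (\<rho> t x) *\<^sub>R V t x
        - (2 * (\<nu> - c)) *\<^sub>R divM (\<lambda>s y. H s y *\<^sub>R symgrad V s y) t x
        - (2 * \<nu> - c) *\<^sub>R grad (\<lambda>s y. G s y * divg V s y) t x
        - (\<kappa>\<^sup>2 - 2 * \<nu> * c + c\<^sup>2) *\<^sub>R divK \<gamma> \<epsilon> \<rho> t x) $ i = 0"
proof -
  have "ptil_eps \<epsilon> (\<rho> t x) * (c * pd i \<Phi> t x) = c / mu \<nu> \<kappa> * pd i (\<lambda>s y. p (\<rho> s y)) t x"
    by (rule ptil_pd_Phi[OF t])
  from momentum_expansion_algebra[OF momentum_u_nth[OF t] first_order_identity[OF t] second_order_identity[OF t]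
      divK_nth_viscous_form[OF t] this]
  show ?thesis
    using mu_pos[OF kappa_pos kappa_less_nu]
    by (simp add: dt_rho_V_nth[OF t] divM_convection_V_nth[OF t] lap_H_V_nth[OF t]
        divM_H_symgrad_V_nth[OF t] grad_G_divg_V_nth[OF t, unfolded grad_nth] grad_nth V_nth)
qed

end

theorem lemma3p2:
  fixes \<rho> :: "real \<Rightarrow> real^'n \<Rightarrow> real" and u :: "real \<Rightarrow> real^'n \<Rightarrow> real^'n"
    and \<phi> p :: "real \<Rightarrow> real"
    and \<nu> \<kappa> \<gamma> \<epsilon> c T :: real
  assumes dim: "CARD('n) = 2 \<or> CARD('n) = 3"
    and par: "0 < \<kappa>" "\<kappa> < \<nu>" "1 < \<gamma>" "0 < \<epsilon>" "0 < c" "0 < T"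
    and phi: "\<forall>r>0. \<exists>D. (\<phi> has_real_derivative D) (at r) \<and> r * D = hp_eps \<gamma> \<epsilon> r"
    and pder: "\<forall>r>0. (p has_real_derivative
                 mu \<nu> \<kappa> * ptil_eps \<epsilon> r * hp_eps \<gamma> \<epsilon> r / r) (at r)"
    and smooth: "smooth_st {0<..<T} \<rho>" "smooth_st {0<..<T} u"
    and per: "periodic_field \<rho>" "periodic_field u"
    and pos: "\<forall>t x. 0 < \<rho> t x"
    and mass: "\<forall>t\<in>{0<..<T}. \<forall>x.
        dt \<rho> t x + divg (\<lambda>s y. \<rho> s y *\<^sub>R u s y) t x = 0"
    and mom: "\<forall>t\<in>{0<..<T}. \<forall>x.
        dt (\<lambda>s y. \<rho> s y *\<^sub>R u s y) t x
        + divM (\<lambda>s y. \<rho> s y *\<^sub>R outer (u s y) (u s y)) t x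
        - (2 * \<nu>) *\<^sub>R divM (stress \<gamma> \<epsilon> \<rho> u) t x
        + grad (\<lambda>s y. \<rho> s y powr \<gamma> + p (\<rho> s y)) t x
        + ptil_eps \<epsilon> (\<rho> t x) *\<^sub>R u t x
        = \<kappa>\<^sup>2 *\<^sub>R divK \<gamma> \<epsilon> \<rho> t x"
  defines "v \<equiv> (\<lambda>t x. u t x + c *\<^sub>R grad (\<lambda>s y. \<phi> (\<rho> s y)) t x)"
  shows "(\<forall>t\<in>{0<..<T}. \<forall>x.
        dt \<rho> t x + divg (\<lambda>s y. \<rho> s y *\<^sub>R v s y) t x
          = c * lap (\<lambda>s y. h_eps \<gamma> \<epsilon> (\<rho> s y)) t x)
    \<and> (\<forall>t\<in>{0<..<T}. \<forall>x.
        dt (\<lambda>s y. \<rho> s y *\<^sub>R v s y) t x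
        + divM (\<lambda>s y. \<rho> s y *\<^sub>R outer (v s y) (v s y)) t x
        + grad (\<lambda>s y. \<rho> s y powr \<gamma>) t x
        + ((mu \<nu> \<kappa> - c) / mu \<nu> \<kappa>) *\<^sub>R grad (\<lambda>s y. p (\<rho> s y)) t x
        - c *\<^sub>R lap (\<lambda>s y. h_eps \<gamma> \<epsilon> (\<rho> s y) *\<^sub>R v s y) t x
        + ptil_eps \<epsilon> (\<rho> t x) *\<^sub>R v t x
        - (2 * (\<nu> - c)) *\<^sub>R divM (\<lambda>s y. h_eps \<gamma> \<epsilon> (\<rho> s y) *\<^sub>R symgrad v s y) t x
        - (2 * \<nu> - c) *\<^sub>R grad (\<lambda>s y. g_eps \<gamma> \<epsilon> (\<rho> s y) * divg v s y) t x
        - (\<kappa>\<^sup>2 - 2 * \<nu> * c + c\<^sup>2) *\<^sub>R divK \<gamma> \<epsilon> \<rho> t x = 0)"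
proof -
  interpret approx_solution \<rho> u \<phi> p \<nu> \<kappa> \<gamma> \<epsilon> c T
    using par phi pder smooth pos mass mom by unfold_locales auto
  show ?thesis
    unfolding v_def using mass_V momentum_V_nth by (simp add: vec_eq_iff)
qed

end
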